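(* Let $(M,\bar g)$ be an $(n+1)$-dimensional umbilically synchronized space-time which is vacuum ($\overline{\mathrm{Ric}}=0$) and geodesic (the acceleration $\mathbf{A}=\bar\nabla_{\mathbf n}\mathbf n$ vanishes). Then $M$ is a Lorentzian cone over a negatively Einstein manifold, i.e. after a suitable choice of the time coordinate the metric takes the form $-dt^2+t^2\gamma_{ij}dx^idx^j$ where $\gamma$ is a time-independent Riemannian metric that is Einstein with negative Einstein constant. If $\dim M=4$, then $M$ represents the expanding hyperbolic model in Minkowski space-time, i.e. $\gamma$ has constant negative curvature and $M$ is (locally) flat Minkowski space-time.
   Context: An umbilically synchronized space-time is an $(n+1)$-dimensional Lorentzian manifold $M$ with coordinates $(t,x^1,\dots,x^n)$ and metric $ds^2=-N^2dt^2+g_{ij}dx^idx^j$ (zero shift), lapse $N>0$, such that each spatial slice $\Sigma_t=\{t=\text{const}\}$ is totally umbilical: $K_{ij}=\bar g(\bar\nabla_{\partial_i}\mathbf n,\partial_j)=\tau g_{ij}$, where $\mathbf n=\frac1N\partial_t$ is the unit normal and $\tau$ the mean curvature. Equivalently $g_{ij}=a^2(t,x^k)\gamma_{ij}$ with $\gamma$ time-independent. The acceleration $\mathbf A=\bar\nabla_{\mathbf n}\mathbf n$ equals the spatial gradient of $\ln N$; the space-time is called geodesic if $\mathbf A=0$.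
   Formalization: The mean curvature $\tau$ must be nonzero at some point of M, so the slices $\Sigma_t$ are not all totally geodesic. The statement above fails without it. *)

theory Defs
  imports "HOL-Analysis.Analysis"
begin

text \<open>A coordinate chart is an open subset of a
real normed vector space 'p together with a coordinate basis E :: 'i \<Rightarrow> 'p indexed by a
finite index type 'i.\<close>

definition partial :: "('i \<Rightarrow> 'p::real_normed_vector) \<Rightarrow> 'i \<Rightarrow> ('p \<Rightarrow> real) \<Rightarrow> 'p \<Rightarrow> real" where
  "partial E m f p = deriv (\<lambda>s. f (p + s *\<^sub>R E m)) 0"

fun iter_partial :: "('i \<Rightarrow> 'p::real_normed_vector) \<Rightarrow> 'i list \<Rightarrow> ('p \<Rightarrow> real) \<Rightarrow> 'p \<Rightarrow> real" where
  "iter_partial E [] f = f"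
| "iter_partial E (m # ms) f = partial E m (iter_partial E ms f)"

definition smooth_on :: "('i \<Rightarrow> 'p::real_normed_vector) \<Rightarrow> 'p set \<Rightarrow> ('p \<Rightarrow> real) \<Rightarrow> bool" where
  "smooth_on E U f \<longleftrightarrow>
     (\<forall>ms. continuous_on U (iter_partial E ms f) \<and>
        (\<forall>m. \<forall>p\<in>U. (\<lambda>s. iter_partial E ms f (p + s *\<^sub>R E m)) differentiable (at 0)))"

definition metric_inv :: "('p \<Rightarrow> 'i::finite \<Rightarrow> 'i \<Rightarrow> real) \<Rightarrow> 'p \<Rightarrow> 'i \<Rightarrow> 'i \<Rightarrow> real" where
  "metric_inv G p a b = matrix_inv (\<chi> x y. G p x y) $ a $ b"

definition christoffel :: "('i::finite \<Rightarrow> 'p::real_normed_vector) \<Rightarrow> ('p \<Rightarrow> 'i \<Rightarrow> 'i \<Rightarrow> real)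
    \<Rightarrow> 'p \<Rightarrow> 'i \<Rightarrow> 'i \<Rightarrow> 'i \<Rightarrow> real" where
  "christoffel E G p l m n = (1/2) * (\<Sum>s\<in>UNIV. metric_inv G p l s *
      (partial E m (\<lambda>q. G q s n) p + partial E n (\<lambda>q. G q s m) p - partial E s (\<lambda>q. G q m n) p))"

definition riemann :: "('i::finite \<Rightarrow> 'p::real_normed_vector) \<Rightarrow> ('p \<Rightarrow> 'i \<Rightarrow> 'i \<Rightarrow> real)
    \<Rightarrow> 'p \<Rightarrow> 'i \<Rightarrow> 'i \<Rightarrow> 'i \<Rightarrow> 'i \<Rightarrow> real" where
  "riemann E G p r s m n =
     partial E m (\<lambda>q. christoffel E G q r n s) p - partial E n (\<lambda>q. christoffel E G q r m s) p
     + (\<Sum>l\<in>UNIV. christoffel E G p r m l * christoffel E G p l n s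
                 - christoffel E G p r n l * christoffel E G p l m s)"

definition riemann_low :: "('i::finite \<Rightarrow> 'p::real_normed_vector) \<Rightarrow> ('p \<Rightarrow> 'i \<Rightarrow> 'i \<Rightarrow> real)
    \<Rightarrow> 'p \<Rightarrow> 'i \<Rightarrow> 'i \<Rightarrow> 'i \<Rightarrow> 'i \<Rightarrow> real" where
  "riemann_low E G p a s m n = (\<Sum>r\<in>UNIV. G p a r * riemann E G p r s m n)"

definition ricci :: "('i::finite \<Rightarrow> 'p::real_normed_vector) \<Rightarrow> ('p \<Rightarrow> 'i \<Rightarrow> 'i \<Rightarrow> real)
    \<Rightarrow> 'p \<Rightarrow> 'i \<Rightarrow> 'i \<Rightarrow> real" where
  "ricci E G p s n = (\<Sum>r\<in>UNIV. riemann E G p r s r n)"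

definition cov_deriv :: "('i::finite \<Rightarrow> 'p::real_normed_vector) \<Rightarrow> ('p \<Rightarrow> 'i \<Rightarrow> 'i \<Rightarrow> real)
    \<Rightarrow> ('p \<Rightarrow> 'i \<Rightarrow> real) \<Rightarrow> 'p \<Rightarrow> 'i \<Rightarrow> 'i \<Rightarrow> real" where
  "cov_deriv E G V p m s = partial E m (\<lambda>q. V q s) p + (\<Sum>l\<in>UNIV. christoffel E G p s m l * V p l)"

definition riemannian_metric_on :: "('j \<Rightarrow> 'p::real_normed_vector) \<Rightarrow> 'p set
    \<Rightarrow> ('p \<Rightarrow> 'i::finite \<Rightarrow> 'i \<Rightarrow> real) \<Rightarrow> bool" where
  "riemannian_metric_on E U G \<longleftrightarrow>
     (\<forall>a b. smooth_on E U (\<lambda>p. G p a b)) \<and>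
     (\<forall>p\<in>U. \<forall>a b. G p a b = G p b a) \<and>
     (\<forall>p\<in>U. \<forall>v::'i \<Rightarrow> real. v \<noteq> (\<lambda>_. 0) \<longrightarrow> (\<Sum>a\<in>UNIV. \<Sum>b\<in>UNIV. G p a b * v a * v b) > 0)"

text \<open>Spacetime points are pairs (t, x) :: real \<times> real^'n; spacetime indices are 'n option,
  None being the time index 0 and Some i the spatial index i.\<close>

definition st_basis :: "'n::finite option \<Rightarrow> real \<times> (real ^ 'n)" where
  "st_basis m = (case m of None \<Rightarrow> (1, 0) | Some i \<Rightarrow> (0, axis i 1))"

definition sp_basis :: "'n::finite \<Rightarrow> real ^ 'n" where
  "sp_basis i = axis i 1"

definition st_metric :: "(real \<times> (real ^ 'n) \<Rightarrow> real) \<Rightarrow> (real \<times> (real ^ 'n) \<Rightarrow> 'n \<Rightarrow> 'n \<Rightarrow> real)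
    \<Rightarrow> real \<times> (real ^ 'n) \<Rightarrow> 'n::finite option \<Rightarrow> 'n option \<Rightarrow> real" where
  "st_metric N g p a b = (case (a, b) of
       (None, None) \<Rightarrow> - (N p)\<^sup>2
     | (Some i, Some j) \<Rightarrow> g p i j
     | _ \<Rightarrow> 0)"

definition unit_normal :: "(real \<times> (real ^ 'n) \<Rightarrow> real) \<Rightarrow> real \<times> (real ^ 'n) \<Rightarrow> 'n::finite option \<Rightarrow> real" where
  "unit_normal N p a = (if a = None then 1 / N p else 0)"

definition second_fund_form :: "(real \<times> (real ^ 'n) \<Rightarrow> real) \<Rightarrow> (real \<times> (real ^ 'n) \<Rightarrow> 'n \<Rightarrow> 'n \<Rightarrow> real)
    \<Rightarrow> real \<times> (real ^ 'n) \<Rightarrow> 'n::finite \<Rightarrow> 'n \<Rightarrow> real" where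
  "second_fund_form N g p i j =
     (\<Sum>s\<in>UNIV. st_metric N g p s (Some j) *
        cov_deriv st_basis (st_metric N g) (unit_normal N) p (Some i) s)"

definition acceleration :: "(real \<times> (real ^ 'n) \<Rightarrow> real) \<Rightarrow> (real \<times> (real ^ 'n) \<Rightarrow> 'n \<Rightarrow> 'n \<Rightarrow> real)
    \<Rightarrow> real \<times> (real ^ 'n) \<Rightarrow> 'n::finite option \<Rightarrow> real" where
  "acceleration N g p s =
     (\<Sum>m\<in>UNIV. unit_normal N p m * cov_deriv st_basis (st_metric N g) (unit_normal N) p m s)"

end

theory Submission
  imports Defs
begin

(*
  The geodesic condition says that the lapse N depends on t alone, and umbilicity says
  d_t g_ij = 2 H g_ij with H = N tau.  The vacuum equations R_0i = (1 - n) d_i H = 0 and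
  R_00 = n (- d_t H + H d_t N / N - H^2) = 0 make H a function of t solving a linear ODE, so
  H vanishes nowhere (not every slice is totally geodesic), and phi = N / H satisfies
  phi' = N.  Hence g / phi^2 is independent of t: with the time s = phi(t) the metric is
  - ds^2 + s^2 gamma, and R_ij = Ric(gamma)_ij + (n - 1) gamma_ij = 0 makes gamma Einstein
  with constant -(n - 1).  In dimension three a traceless algebraic curvature tensor vanishes,
  so gamma has constant curvature -1, and then the Gauss equation shows that the cone is flat.
*)

lemma eventually_line_in_open:
  fixes p :: "'p::real_normed_vector"
  assumes "open S" "p \<in> S"
  shows "eventually (\<lambda>s::real. p + s *\<^sub>R v \<in> S) (nhds 0)"
proof -
  have "continuous (at (0::real)) (\<lambda>s. p + s *\<^sub>R v)"
    by (intro continuous_intros)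
  then have "((\<lambda>s. p + s *\<^sub>R v) \<longlongrightarrow> p) (nhds (0::real))"
    using tendsto_at_iff_tendsto_nhds[of "\<lambda>s. p + s *\<^sub>R v" 0] by (simp add: isCont_def)
  then show ?thesis using assms topological_tendstoD by fastforce
qed

lemma partial_cong_on_open:
  assumes "open S" "p \<in> S" "\<And>q. q \<in> S \<Longrightarrow> f q = h q"
  shows "partial E m f p = partial E m h p"
  unfolding partial_def
  by (rule deriv_cong_ev)
     (use eventually_line_in_open[OF assms(1,2), of "E m"] assms(3) in \<open>auto elim: eventually_mono\<close>)

lemma partial_eqI:
  assumes "DERIV (\<lambda>s. f (p + s *\<^sub>R E m)) 0 :> D"
  shows "partial E m f p = D"
  using assms unfolding partial_def by (rule DERIV_imp_deriv)

lemma partial_eqI_on_open: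
  assumes "open S" "p \<in> S" "\<And>q. q \<in> S \<Longrightarrow> f q = h q"
    and "DERIV (\<lambda>s. h (p + s *\<^sub>R E m)) 0 :> D"
  shows "partial E m f p = D"
  using partial_cong_on_open[of S p f h E m, OF assms(1-3)] partial_eqI[where f = h and p = p and E = E and m = m, OF assms(4)] by simp

lemma partial_const [simp]: "partial E m (\<lambda>q. c) p = 0"
  unfolding partial_def by simp

lemma partial_eq_0_on_open:
  assumes "open S" "p \<in> S" "\<And>q. q \<in> S \<Longrightarrow> f q = c"
  shows "partial E m f p = 0"
  using partial_cong_on_open[OF assms(1,2), of f "\<lambda>q. c"] assms(3) by simp

lemma smooth_on_continuous_on: "smooth_on E S f \<Longrightarrow> continuous_on S (iter_partial E ms f)"
  unfolding smooth_on_def by blast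

lemma smooth_on_DERIV_iter_partial:
  assumes "smooth_on E S f" "p \<in> S"
  shows "DERIV (\<lambda>s. iter_partial E ms f (p + s *\<^sub>R E m)) 0 :> iter_partial E (m # ms) f p"
proof -
  have "(\<lambda>s. iter_partial E ms f (p + s *\<^sub>R E m)) differentiable (at 0)"
    using assms unfolding smooth_on_def by blast
  then show ?thesis
    by (simp add: partial_def DERIV_deriv_iff_real_differentiable)
qed

lemma smooth_on_DERIV_partial:
  assumes "smooth_on E S f" "p \<in> S"
  shows "DERIV (\<lambda>s. f (p + s *\<^sub>R E m)) 0 :> partial E m f p"
  using smooth_on_DERIV_iter_partial[OF assms, of "[]"] by simp

lemma smooth_on_DERIV_partial2:
  assumes "smooth_on E S f" "p \<in> S"
  shows "DERIV (\<lambda>s. partial E k f (p + s *\<^sub>R E m)) 0 :> partial E m (partial E k f) p"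
  using smooth_on_DERIV_iter_partial[OF assms, of "[k]"] by simp

lemma DERIV_along_line:
  fixes F :: "'a::real_normed_vector \<Rightarrow> real"
  assumes "\<And>z. z \<in> U \<Longrightarrow> DERIV (\<lambda>s. F (z + s *\<^sub>R v)) 0 :> F' z"
    and "y + u *\<^sub>R v \<in> U"
  shows "DERIV (\<lambda>u. F (y + u *\<^sub>R v)) u :> F' (y + u *\<^sub>R v)"
proof -
  have "DERIV (\<lambda>s. F (y + (s + u) *\<^sub>R v)) 0 :> F' (y + u *\<^sub>R v)"
    using assms(1)[OF assms(2)] by (simp add: scaleR_add_left algebra_simps)
  then show ?thesis using DERIV_shift[of "\<lambda>w. F (y + w *\<^sub>R v)" _ 0 u] by simp
qed

lemma st_line_None [simp]: "(t, x) + s *\<^sub>R st_basis None = (t + s, x)"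
  by (simp add: st_basis_def)

lemma st_line_Some [simp]: "(t, x) + s *\<^sub>R st_basis (Some i) = (t, x + s *\<^sub>R axis i 1)"
  by (simp add: st_basis_def)

lemma sp_line [simp]: "x + s *\<^sub>R sp_basis i = x + s *\<^sub>R axis i 1"
  by (simp add: sp_basis_def)

lemma DERIV_time_iff: "DERIV (\<lambda>s. f (t + s, x)) 0 :> D \<longleftrightarrow> DERIV (\<lambda>u. f (u, x)) t :> D"
  using DERIV_shift[of "\<lambda>u. f (u, x)" D 0 t] by (simp add: add.commute)

lemma iter_partial_slice:
  assumes "open U" "x \<in> U"
  shows "iter_partial sp_basis ms (\<lambda>x. f (t, x)) x = iter_partial st_basis (map Some ms) f (t, x)"
  using assms(2)
proof (induction ms arbitrary: x)
  case Nil
  then show ?case by simp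
next
  case (Cons m ms)
  have "eventually (\<lambda>s. x + s *\<^sub>R sp_basis m \<in> U) (nhds 0)"
    by (rule eventually_line_in_open[OF assms(1) Cons.prems])
  then have "eventually (\<lambda>s. iter_partial sp_basis ms (\<lambda>x. f (t, x)) (x + s *\<^sub>R sp_basis m)
      = iter_partial st_basis (map Some ms) f ((t, x) + s *\<^sub>R st_basis (Some m))) (nhds 0)"
    by (rule eventually_mono) (simp add: Cons.IH)
  then show ?case
    unfolding iter_partial.simps list.map partial_def by (rule deriv_cong_ev) simp
qed

lemma smooth_on_slice:
  assumes f: "smooth_on st_basis (I \<times> U) f" and U: "open U" and t: "t \<in> I"
  shows "smooth_on sp_basis U (\<lambda>x. f (t, x))"
  unfolding smooth_on_def
proof (intro allI conjI ballI)
  fix ms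
  have "continuous_on U (\<lambda>x. iter_partial st_basis (map Some ms) f (t, x))"
    by (rule continuous_on_compose2[OF smooth_on_continuous_on[OF f]])
       (auto intro!: continuous_intros simp: t)
  then show "continuous_on U (iter_partial sp_basis ms (\<lambda>x. f (t, x)))"
    by (rule continuous_on_eq) (simp add: iter_partial_slice[OF U])
  fix m x assume x: "x \<in> U"
  have ev: "eventually (\<lambda>s. iter_partial sp_basis ms (\<lambda>x. f (t, x)) (x + s *\<^sub>R sp_basis m)
      = iter_partial st_basis (map Some ms) f ((t, x) + s *\<^sub>R st_basis (Some m))) (nhds 0)"
    by (rule eventually_mono[OF eventually_line_in_open[OF U x, of "sp_basis m"]])
       (simp add: iter_partial_slice[OF U])
  have D: "DERIV (\<lambda>s. iter_partial st_basis (map Some ms) f ((t, x) + s *\<^sub>R st_basis (Some m))) 0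
      :> iter_partial st_basis (Some m # map Some ms) f (t, x)"
    by (rule smooth_on_DERIV_iter_partial[OF f]) (simp add: t x)
  show "(\<lambda>s. iter_partial sp_basis ms (\<lambda>x. f (t, x)) (x + s *\<^sub>R sp_basis m)) differentiable (at 0)"
    unfolding real_differentiable_def by (intro exI) (rule iffD2[OF DERIV_cong_ev[OF refl ev refl] D])
qed

lemma smooth_on_cmult:
  assumes f: "smooth_on E U f" and U: "open U"
  shows "smooth_on E U (\<lambda>x. c * f x)"
proof -
  have iter: "iter_partial E ms (\<lambda>x. c * f x) x = c * iter_partial E ms f x" if "x \<in> U" for ms x
    using that
  proof (induction ms arbitrary: x)
    case (Cons m ms)
    have "partial E m (iter_partial E ms (\<lambda>x. c * f x)) x = partial E m (\<lambda>x. c * iter_partial E ms f x) x"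
      using Cons by (intro partial_cong_on_open[OF U])
    also have "\<dots> = c * partial E m (iter_partial E ms f) x"
      using smooth_on_DERIV_iter_partial[OF f Cons.prems, of ms m] by (intro partial_eqI DERIV_cmult) simp
    finally show ?case by simp
  qed simp
  show ?thesis
    unfolding smooth_on_def
  proof (intro allI conjI ballI)
    fix ms
    show "continuous_on U (iter_partial E ms (\<lambda>x. c * f x))"
      by (rule continuous_on_eq[OF continuous_on_mult[OF continuous_on_const smooth_on_continuous_on[OF f]]])
         (simp add: iter)
    fix m x assume x: "x \<in> U"
    have ev: "eventually (\<lambda>s. iter_partial E ms (\<lambda>x. c * f x) (x + s *\<^sub>R E m)
        = c * iter_partial E ms f (x + s *\<^sub>R E m)) (nhds 0)"
      by (rule eventually_mono[OF eventually_line_in_open[OF U x, of "E m"]]) (simp add: iter)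
    have D: "DERIV (\<lambda>s. c * iter_partial E ms f (x + s *\<^sub>R E m)) 0 :> c * iter_partial E (m # ms) f x"
      by (intro DERIV_cmult smooth_on_DERIV_iter_partial[OF f x])
    show "(\<lambda>s. iter_partial E ms (\<lambda>x. c * f x) (x + s *\<^sub>R E m)) differentiable (at 0)"
      unfolding real_differentiable_def by (intro exI) (rule iffD2[OF DERIV_cong_ev[OF refl ev refl] D])
  qed
qed

lemma smooth_on_DERIV_time:
  assumes "smooth_on st_basis (I \<times> U) f" "t \<in> I" "x \<in> U"
  shows "DERIV (\<lambda>u. f (u, x)) t :> partial st_basis None f (t, x)"
  using smooth_on_DERIV_partial[OF assms(1), of "(t, x)" None] assms(2,3) by (simp add: DERIV_time_iff)

lemma sum_UNIV_option:
  "(\<Sum>a\<in>(UNIV::'n::finite option set). f a) = f None + (\<Sum>i\<in>UNIV. f (Some i))"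
proof -
  have "(UNIV::'n option set) = insert None (Some ` UNIV)"
    by (auto intro: option.exhaust)
  then have "sum f UNIV = f None + sum f (Some ` UNIV)"
    by (metis finite finite_imageI image_iff option.simps(3) sum.insert)
  then show ?thesis by (simp add: sum.reindex)
qed

lemma sum_swap_mult:
  "(\<Sum>j\<in>B. (\<Sum>i\<in>A. a i * b i j) * c j) = (\<Sum>i\<in>A. a i * (\<Sum>j\<in>B. b i j * c j))"
  for a :: "'i \<Rightarrow> real"
  by (simp add: sum_distrib_left sum_distrib_right mult.assoc sum.swap[of _ B])

definition kdelta :: "'a \<Rightarrow> 'a \<Rightarrow> real" where
  "kdelta a b = (if a = b then 1 else 0)"

lemma kdelta_refl [simp]: "kdelta a a = 1"
  by (simp add: kdelta_def)

lemma kdelta_simps: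
  "kdelta a b * (x::real) = (if a = b then x else 0)"
  "(x::real) * kdelta a b = (if a = b then x else 0)"
  "(if P then (x::real) else 0) * y = (if P then x * y else 0)"
  "(y::real) * (if P then x else 0) = (if P then y * x else 0)"
  "- (if P then (x::real) else 0) = (if P then - x else 0)"
  by (simp_all add: kdelta_def)
lemma sum_kdelta [simp]:
  fixes i :: "'a::finite"
  shows "(\<Sum>k\<in>UNIV. kdelta i k * f k) = f i" "(\<Sum>k\<in>UNIV. kdelta k i * f k) = f i"
    "(\<Sum>k\<in>UNIV. f k * kdelta i k) = f i" "(\<Sum>k\<in>UNIV. f k * kdelta k i) = f i"
  by (simp_all add: kdelta_simps)

section \<open>Inverse of a positive definite matrix\<close>

definition positive_definite :: "('i::finite \<Rightarrow> 'i \<Rightarrow> real) \<Rightarrow> bool" where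
  "positive_definite M \<longleftrightarrow>
     (\<forall>v::'i \<Rightarrow> real. v \<noteq> (\<lambda>_. 0) \<longrightarrow> (\<Sum>a\<in>UNIV. \<Sum>b\<in>UNIV. M a b * v a * v b) > 0)"

lemma riemannian_metric_on_iff:
  "riemannian_metric_on E U G \<longleftrightarrow>
     (\<forall>a b. smooth_on E U (\<lambda>p. G p a b)) \<and> (\<forall>p\<in>U. \<forall>a b. G p a b = G p b a) \<and>
     (\<forall>p\<in>U. positive_definite (G p))"
  by (simp add: riemannian_metric_on_def positive_definite_def)

lemma positive_definite_diag_pos:
  assumes "positive_definite M"
  shows "M i i > 0"
proof -
  have "kdelta i \<noteq> (\<lambda>_. 0)" by (auto simp: fun_eq_iff kdelta_def)
  then have "(\<Sum>a\<in>UNIV. \<Sum>b\<in>UNIV. M a b * kdelta i a * kdelta i b) > 0"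
    using assms unfolding positive_definite_def by blast
  then show ?thesis by (simp add: kdelta_simps)
qed

definition matrix_inv_fun :: "('i::finite \<Rightarrow> 'i \<Rightarrow> real) \<Rightarrow> 'i \<Rightarrow> 'i \<Rightarrow> real" where
  "matrix_inv_fun M i j = matrix_inv (\<chi> x y. M x y) $ i $ j"

lemma metric_inv_eq_matrix_inv_fun: "metric_inv G p = matrix_inv_fun (G p)"
  by (auto simp: metric_inv_def matrix_inv_fun_def fun_eq_iff)

lemma invertible_matrix_inv:
  fixes A :: "real^'n^'n"
  assumes "invertible A"
  shows "A ** matrix_inv A = mat 1 \<and> matrix_inv A ** A = mat 1"
  using assms unfolding invertible_def matrix_inv_def by (rule someI_ex)

lemma matrix_inv_eqI:
  fixes A B :: "real^'n^'n"
  assumes "A ** B = mat 1"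
  shows "matrix_inv A = B"
proof -
  have "invertible A"
    using assms matrix_left_right_inverse unfolding invertible_def by blast
  then have "matrix_inv A ** A = mat 1" by (simp add: invertible_matrix_inv)
  then have "matrix_inv A ** (A ** B) = B" by (simp add: matrix_mul_assoc)
  then show ?thesis using assms by simp
qed

lemma matrix_inv_fun_eqI:
  assumes "\<And>i j. (\<Sum>k\<in>UNIV. M i k * B k j) = kdelta i j"
  shows "matrix_inv_fun M i j = B i j"
proof -
  have "(\<chi> x y. M x y) ** (\<chi> x y. B x y) = mat 1"
    using assms by (simp add: matrix_matrix_mult_def mat_def vec_eq_iff kdelta_def)
  then show ?thesis by (simp add: matrix_inv_fun_def matrix_inv_eqI)
qed

lemma positive_definite_invertible:
  fixes M :: "'i::finite \<Rightarrow> 'i \<Rightarrow> real"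
  assumes "positive_definite M"
  shows "invertible (\<chi> x y. M x y)"
proof -
  have "x = 0" if "(\<chi> x y. M x y) *v x = 0" for x :: "real^'i"
  proof -
    have "(\<Sum>b\<in>UNIV. M a b * x $ b) = 0" for a
      using that by (simp add: matrix_vector_mult_def vec_eq_iff)
    then have "(\<Sum>a\<in>UNIV. \<Sum>b\<in>UNIV. M a b * x $ a * x $ b) = 0"
      by (simp add: sum_distrib_left[symmetric] mult_ac)
    then have "(\<lambda>i. x $ i) = (\<lambda>_. 0)"
      using assms unfolding positive_definite_def by force
    then show ?thesis by (simp add: vec_eq_iff fun_eq_iff)
  qed
  then obtain B where "B ** (\<chi> x y. M x y) = mat 1"
    using matrix_left_invertible_ker by blast
  then show ?thesis
    using matrix_left_right_inverse unfolding invertible_def by blast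
qed

lemma positive_definite_matrix_inv_fun:
  assumes "positive_definite M"
  shows "(\<Sum>k\<in>UNIV. M i k * matrix_inv_fun M k j) = kdelta i j"
    and "(\<Sum>k\<in>UNIV. matrix_inv_fun M i k * M k j) = kdelta i j"
  using invertible_matrix_inv[OF positive_definite_invertible[OF assms]]
  by (auto simp: matrix_matrix_mult_def mat_def vec_eq_iff kdelta_def matrix_inv_fun_def)

lemma matrix_inv_fun_sym:
  assumes "\<And>a b. M a b = M b a" and "positive_definite M"
  shows "matrix_inv_fun M i j = matrix_inv_fun M j i"
proof (rule matrix_inv_fun_eqI)
  fix i j
  have "(\<Sum>k\<in>UNIV. M i k * matrix_inv_fun M j k) = (\<Sum>k\<in>UNIV. matrix_inv_fun M j k * M k i)"
    using assms(1) by (simp add: mult.commute)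
  also have "\<dots> = kdelta i j"
    using positive_definite_matrix_inv_fun(2)[OF assms(2)] by (simp add: kdelta_def)
  finally show "(\<Sum>k\<in>UNIV. M i k * matrix_inv_fun M j k) = kdelta i j" .
qed

lemma matrix_inv_fun_cramer:
  assumes d: "det ((\<chi> a b. M a b) :: real^'i^'i) \<noteq> 0"
  shows "matrix_inv_fun M i j =
    det ((\<chi> a b. if b = i then kdelta a j else M a b) :: real^'i^'i) / det ((\<chi> a b. M a b) :: real^'i^'i)"
proof -
  let ?A = "(\<chi> a b. M a b) :: real^'i^'i"
  have "?A ** matrix_inv ?A = mat 1"
    using d invertible_det_nz invertible_matrix_inv by blast
  then have "?A *v (\<chi> k. matrix_inv ?A $ k $ j) = (\<chi> a. kdelta a j)"
    by (auto simp: vec_eq_iff mat_def kdelta_def matrix_vector_mult_def matrix_matrix_mult_def)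
  from cramer[OF d] this have "(\<chi> k. matrix_inv ?A $ k $ j) =
      (\<chi> k. det ((\<chi> a b. if b = k then (\<chi> a. kdelta a j) $ a else ?A $ a $ b) :: real^'i^'i) / det ?A)"
    by blast
  moreover have "((\<chi> a b. if b = i then (\<chi> a. kdelta a j) $ a else ?A $ a $ b) :: real^'i^'i)
      = (\<chi> a b. if b = i then kdelta a j else M a b)"
    by (simp add: vec_eq_iff)
  ultimately show ?thesis by (simp add: vec_eq_iff matrix_inv_fun_def)
qed

lemma differentiable_prod:
  fixes f :: "'i \<Rightarrow> real \<Rightarrow> real"
  assumes "finite I" "\<forall>i\<in>I. f i differentiable (at x within S)"
  shows "(\<lambda>x. \<Prod>i\<in>I. f i x) differentiable (at x within S)"
  using assms by (induction I rule: finite_induct) (auto intro!: differentiable_mult)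

lemma det_differentiable:
  fixes M :: "real \<Rightarrow> 'i::finite \<Rightarrow> 'i \<Rightarrow> real"
  assumes "\<And>a b. (\<lambda>s. M s a b) differentiable (at x within S)"
  shows "(\<lambda>s. det ((\<chi> a b. M s a b) :: real^'i^'i)) differentiable (at x within S)"
  unfolding det_def
  by (intro differentiable_sum ballI differentiable_mult differentiable_const differentiable_prod)
     (auto simp: finite_permutations assms)

lemma matrix_inv_fun_differentiable:
  fixes M :: "real \<Rightarrow> 'i::finite \<Rightarrow> 'i \<Rightarrow> real"
  assumes d: "\<And>a b. (\<lambda>s. M s a b) differentiable (at 0)"
    and nz: "eventually (\<lambda>s. det ((\<chi> a b. M s a b) :: real^'i^'i) \<noteq> 0) (nhds 0)"
  shows "(\<lambda>s. matrix_inv_fun (M s) i j) differentiable (at 0)"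
proof -
  define h where "h s = det ((\<chi> a b. if b = i then kdelta a j else M s a b) :: real^'i^'i)
    / det ((\<chi> a b. M s a b) :: real^'i^'i)" for s
  have "h differentiable (at 0)"
    unfolding h_def
  proof (intro differentiable_divide det_differentiable)
    show "(\<lambda>s. if b = i then kdelta a j else M s a b) differentiable (at 0)" for a b
      using d by (cases "b = i") auto
  qed (use d eventually_nhds_x_imp_x[OF nz] in auto)
  then obtain D where D: "DERIV h 0 :> D" by (auto simp: real_differentiable_def)
  have ev: "eventually (\<lambda>s. matrix_inv_fun (M s) i j = h s) (nhds 0)"
    by (rule eventually_mono[OF nz]) (simp add: matrix_inv_fun_cramer h_def)
  have "DERIV (\<lambda>s. matrix_inv_fun (M s) i j) 0 :> D"
    by (rule iffD2[OF DERIV_cong_ev[OF refl ev refl] D])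
  then show ?thesis by (auto simp: real_differentiable_def)
qed

lemma axis_derivative_zero_constant_on_box:
  fixes f :: "real^'n \<Rightarrow> real"
  assumes d: "\<And>w i. w \<in> box a b \<Longrightarrow> DERIV (\<lambda>s. f (w + s *\<^sub>R axis i 1)) 0 :> 0"
    and x: "x \<in> box a b" and y: "y \<in> box a b"
  shows "f y = f x"
proof -
  define z where "z A = (\<chi> i. if i \<in> A then y$i else x$i)" for A
  have z_box: "z A \<in> box a b" for A
    using x y by (simp add: z_def mem_box_cart)
  have "f (z A) = f x" if "finite A" for A
    using that
  proof (induction A rule: finite_induct)
    case empty
    then show ?case by (simp add: z_def)
  next
    case (insert k A)
    define dk where "dk = y$k - x$k"
    define h where "h s = f (z A + s *\<^sub>R axis k 1)" for s
    have step: "z (insert k A) = z A + dk *\<^sub>R axis k 1"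
      using insert by (auto simp: z_def vec_eq_iff axis_def dk_def)
    have "\<exists>c. \<forall>s\<in>closed_segment 0 dk. h s = c"
    proof (rule has_field_derivative_zero_constant)
      fix s assume "s \<in> closed_segment 0 dk"
      then obtain u where u: "0 \<le> u" "u \<le> 1" "s = u * dk"
        by (auto simp: closed_segment_def)
      have "z A + s *\<^sub>R axis k 1 = (1 - u) *\<^sub>R z A + u *\<^sub>R z (insert k A)"
        using u by (simp add: step algebra_simps)
      also have "\<dots> \<in> box a b"
        using u by (intro convexD[OF convex_box(2)] z_box) auto
      finally have "DERIV (\<lambda>s'. f ((z A + s *\<^sub>R axis k 1) + s' *\<^sub>R axis k 1)) 0 :> 0"
        by (rule d)
      then have "DERIV (\<lambda>s'. h (s' + s)) 0 :> 0"
        by (simp add: h_def scaleR_add_left add_ac)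
      then show "(h has_real_derivative 0) (at s within closed_segment 0 dk)"
        using DERIV_shift[of h 0 0 s] by (simp add: has_field_derivative_at_within)
    qed simp
    then have "h dk = h 0" by auto
    then show ?case using insert step by (simp add: h_def)
  qed
  moreover have "z UNIV = y" by (simp add: z_def vec_eq_iff)
  ultimately show ?thesis by (metis finite)
qed

lemma axis_derivative_zero_constant:
  fixes f :: "real^'n \<Rightarrow> real"
  assumes U: "open U" "connected U"
    and d: "\<And>w i. w \<in> U \<Longrightarrow> DERIV (\<lambda>s. f (w + s *\<^sub>R axis i 1)) 0 :> 0"
    and xy: "x \<in> U" "y \<in> U"
  shows "f x = f y"
proof (rule connected_local_const[OF U(2) xy], intro ballI)
  fix c assume "c \<in> U"
  then obtain a b where ab: "box a b \<subseteq> U" "c \<in> box a b"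
    using open_contains_box[OF U(1)] by metis
  then have "eventually (\<lambda>w. w \<in> box a b) (at c within U)"
    by (auto simp: eventually_at_topological intro!: exI[of _ "box a b"])
  then show "eventually (\<lambda>w. f c = f w) (at c within U)"
    by (rule eventually_mono)
       (use ab d axis_derivative_zero_constant_on_box[of a b f] in \<open>metis subsetD\<close>)
qed


lemma double_difference_mvt:
  fixes F :: "'a::real_normed_vector \<Rightarrow> real"
  assumes t: "t > 0"
    and inU: "\<And>u v. 0 \<le> u \<Longrightarrow> u \<le> t \<Longrightarrow> 0 \<le> v \<Longrightarrow> v \<le> t \<Longrightarrow> x + u *\<^sub>R a + v *\<^sub>R b \<in> U"
    and d1: "\<And>z. z \<in> U \<Longrightarrow> DERIV (\<lambda>s. F (z + s *\<^sub>R a)) 0 :> Fa z"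
    and d2: "\<And>z. z \<in> U \<Longrightarrow> DERIV (\<lambda>s. Fa (z + s *\<^sub>R b)) 0 :> Fab z"
  obtains u v where "0 < u" "u < t" "0 < v" "v < t"
    "F (x + t *\<^sub>R a + t *\<^sub>R b) - F (x + t *\<^sub>R a) - F (x + t *\<^sub>R b) + F x
       = t * t * Fab (x + u *\<^sub>R a + v *\<^sub>R b)"
proof -
  define A where "A u = F ((x + t *\<^sub>R b) + u *\<^sub>R a) - F (x + u *\<^sub>R a)" for u
  have "\<exists>u. 0 < u \<and> u < t \<and> A t - A 0 = (t - 0) * (Fa ((x + t *\<^sub>R b) + u *\<^sub>R a) - Fa (x + u *\<^sub>R a))"
  proof (rule MVT2[OF t])
    fix u assume u: "0 \<le> u" "u \<le> t"
    have "(x + t *\<^sub>R b) + u *\<^sub>R a \<in> U" "x + u *\<^sub>R a \<in> U"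
      using inU[OF u, of t] inU[OF u, of 0] t by (simp_all add: algebra_simps)
    then show "DERIV A u :> Fa ((x + t *\<^sub>R b) + u *\<^sub>R a) - Fa (x + u *\<^sub>R a)"
      unfolding A_def[abs_def] by (intro DERIV_diff DERIV_along_line[of U F a Fa] d1)
  qed
  then obtain u where u: "0 < u" "u < t"
    and Au: "A t - A 0 = t * (Fa ((x + t *\<^sub>R b) + u *\<^sub>R a) - Fa (x + u *\<^sub>R a))"
    by auto
  define B where "B v = Fa ((x + u *\<^sub>R a) + v *\<^sub>R b)" for v
  have "\<exists>v. 0 < v \<and> v < t \<and> B t - B 0 = (t - 0) * Fab ((x + u *\<^sub>R a) + v *\<^sub>R b)"
  proof (rule MVT2[OF t])
    fix v assume "0 \<le> v" "v \<le> t"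
    then have i: "(x + u *\<^sub>R a) + v *\<^sub>R b \<in> U" using inU[of u v] u by simp
    show "DERIV B v :> Fab ((x + u *\<^sub>R a) + v *\<^sub>R b)"
      unfolding B_def[abs_def] by (rule DERIV_along_line[of U Fa b Fab, OF d2 i])
  qed
  then obtain v where v: "0 < v" "v < t" and Bv: "B t - B 0 = t * Fab ((x + u *\<^sub>R a) + v *\<^sub>R b)"
    by auto
  have "F (x + t *\<^sub>R a + t *\<^sub>R b) - F (x + t *\<^sub>R a) - F (x + t *\<^sub>R b) + F x = t * (B t - B 0)"
    using Au by (simp add: A_def B_def algebra_simps)
  then show ?thesis using that u v Bv by simp
qed


lemma dist_parallelogram_small:
  fixes x a b :: "'a::real_normed_vector"
  assumes "e > 0"
  obtains t0 where "t0 > 0"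
    "\<And>u v. 0 \<le> u \<Longrightarrow> u \<le> t0 \<Longrightarrow> 0 \<le> v \<Longrightarrow> v \<le> t0 \<Longrightarrow> dist (x + u *\<^sub>R a + v *\<^sub>R b) x < e"
proof
  define t0 where "t0 = e / (norm a + norm b + 1)"
  have den: "norm a + norm b + 1 > 0" by (intro add_nonneg_pos) auto
  then show t0: "t0 > 0" using assms by (simp add: t0_def)
  fix u v assume uv: "0 \<le> u" "u \<le> t0" "0 \<le> v" "v \<le> t0"
  have "dist (x + u *\<^sub>R a + v *\<^sub>R b) x \<le> u * norm a + v * norm b"
    using uv norm_triangle_ineq[of "u *\<^sub>R a" "v *\<^sub>R b"] by (simp add: dist_norm)
  also have "\<dots> \<le> t0 * (norm a + norm b)"
    using uv by (simp add: distrib_left add_mono mult_right_mono)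
  also have "\<dots> < t0 * (norm a + norm b + 1)"
    using t0 by simp
  also have "\<dots> = e"
    using den by (simp add: t0_def)
  finally show "dist (x + u *\<^sub>R a + v *\<^sub>R b) x < e" .
qed

lemma second_difference_tendsto:
  fixes F :: "'a::real_normed_vector \<Rightarrow> real"
  assumes U: "open U" and x: "x \<in> U"
    and d1: "\<And>z. z \<in> U \<Longrightarrow> DERIV (\<lambda>s. F (z + s *\<^sub>R a)) 0 :> Fa z"
    and d2: "\<And>z. z \<in> U \<Longrightarrow> DERIV (\<lambda>s. Fa (z + s *\<^sub>R b)) 0 :> Fab z"
    and c: "continuous_on U Fab"
  shows "((\<lambda>t. (F (x + t *\<^sub>R a + t *\<^sub>R b) - F (x + t *\<^sub>R a) - F (x + t *\<^sub>R b) + F x) / (t * t))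
           \<longlongrightarrow> Fab x) (at_right 0)"
proof (rule tendstoI)
  fix e :: real assume "e > 0"
  then obtain d where d: "d > 0" "\<forall>z\<in>U. dist z x < d \<longrightarrow> dist (Fab z) (Fab x) < e"
    using c x unfolding continuous_on_iff by blast
  obtain r where r: "r > 0" "ball x r \<subseteq> U" using U x open_contains_ball by blast
  have dr: "min d r > 0" using d r by simp
  obtain t0 where t0: "t0 > 0"
    and small: "\<And>u v. 0 \<le> u \<Longrightarrow> u \<le> t0 \<Longrightarrow> 0 \<le> v \<Longrightarrow> v \<le> t0 \<Longrightarrow> dist (x + u *\<^sub>R a + v *\<^sub>R b) x < min d r"
    using dist_parallelogram_small[OF dr, of x a b] by blast
  have near: "x + u *\<^sub>R a + v *\<^sub>R b \<in> U \<and> dist (Fab (x + u *\<^sub>R a + v *\<^sub>R b)) (Fab x) < e"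
    if "0 \<le> u" "u \<le> t0" "0 \<le> v" "v \<le> t0" for u v
  proof -
    have "dist (x + u *\<^sub>R a + v *\<^sub>R b) x < d" "dist (x + u *\<^sub>R a + v *\<^sub>R b) x < r"
      using small[OF that] by auto
    moreover from this(2) have "x + u *\<^sub>R a + v *\<^sub>R b \<in> U"
      using r by (auto simp: dist_commute)
    ultimately show ?thesis using d(2) by blast
  qed
  have "dist ((F (x + t *\<^sub>R a + t *\<^sub>R b) - F (x + t *\<^sub>R a) - F (x + t *\<^sub>R b) + F x) / (t * t))
      (Fab x) < e" if t: "0 < t" "t < t0" for t
  proof -
    have "x + u *\<^sub>R a + v *\<^sub>R b \<in> U" if "0 \<le> u" "u \<le> t" "0 \<le> v" "v \<le> t" for u v
    proof -
      have "u \<le> t0" "v \<le> t0" using that t by linarith+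
      then show ?thesis using near[of u v] that by blast
    qed
    then obtain u v where uv: "0 < u" "u < t" "0 < v" "v < t"
      and eq: "F (x + t *\<^sub>R a + t *\<^sub>R b) - F (x + t *\<^sub>R a) - F (x + t *\<^sub>R b) + F x
         = t * t * Fab (x + u *\<^sub>R a + v *\<^sub>R b)"
      using double_difference_mvt[OF \<open>t > 0\<close> _ d1 d2] by blast
    have "u \<le> t0" "v \<le> t0" using uv t by linarith+
    then show ?thesis using near[of u v] uv eq t by simp
  qed
  with t0 show "eventually (\<lambda>t. dist ((F (x + t *\<^sub>R a + t *\<^sub>R b) - F (x + t *\<^sub>R a)
      - F (x + t *\<^sub>R b) + F x) / (t * t)) (Fab x) < e) (at_right 0)"
    unfolding eventually_at_right_field by blast
qed


text \<open>Schwarz's theorem: the second difference quotient is symmetric in the two directions and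
  tends to either mixed partial derivative.\<close>

lemma partial_commute:
  assumes U: "open U" and x: "x \<in> U" and f: "smooth_on E U f"
  shows "partial E k (partial E l f) x = partial E l (partial E k f) x"
proof -
  define \<Delta> where "\<Delta> a b t = (f (x + t *\<^sub>R a + t *\<^sub>R b) - f (x + t *\<^sub>R a) - f (x + t *\<^sub>R b) + f x) / (t * t)"
    for a b t
  have lim: "(\<Delta> (E i) (E j) \<longlongrightarrow> partial E j (partial E i f) x) (at_right 0)" for i j
    unfolding \<Delta>_def
  proof (rule second_difference_tendsto[OF U x])
    show "DERIV (\<lambda>s. f (z + s *\<^sub>R E i)) 0 :> partial E i f z" if "z \<in> U" for z
      using smooth_on_DERIV_partial[OF f that] .
    show "DERIV (\<lambda>s. partial E i f (z + s *\<^sub>R E j)) 0 :> partial E j (partial E i f) z" if "z \<in> U" for z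
      using smooth_on_DERIV_partial2[OF f that] .
    show "continuous_on U (partial E j (partial E i f))"
      using smooth_on_continuous_on[OF f, of "[j, i]"] by simp
  qed
  have "\<Delta> (E k) (E l) = \<Delta> (E l) (E k)"
    by (simp add: \<Delta>_def fun_eq_iff add_ac)
  then have "(\<Delta> (E k) (E l) \<longlongrightarrow> partial E k (partial E l f) x) (at_right 0)"
    using lim[of l k] by simp
  then show ?thesis
    using tendsto_unique[OF trivial_limit_at_right_real _ lim[of k l]] by blast
qed

lemma linear_ode_nonzero:
  fixes y k :: "real \<Rightarrow> real"
  assumes I: "is_interval I" and k: "continuous_on I k"
    and y: "\<And>t. t \<in> I \<Longrightarrow> DERIV y t :> k t * y t"
    and a: "a \<in> I" "y a \<noteq> 0" and b: "b \<in> I"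
  shows "y b \<noteq> 0"
proof -
  define J where "J = {min a b..max a b}"
  have J: "J \<subseteq> I"
    using I a b unfolding is_interval_1 J_def by (metis atLeastAtMost_iff min_def max_def subsetI)
  obtain F where F: "\<And>t. t \<in> J \<Longrightarrow> (F has_vector_derivative k t) (at t within J)"
    using antiderivative_continuous[of "min a b" "max a b" k] continuous_on_subset[OF k J]
    unfolding J_def by auto
  \<comment> \<open>integrating factor: \<open>y * exp (- F)\<close> has derivative zero\<close>
  have "\<exists>c. \<forall>t\<in>J. y t * exp (- F t) = c"
  proof (rule has_field_derivative_zero_constant)
    fix t assume t: "t \<in> J"
    have dy: "(y has_real_derivative k t * y t) (at t within J)"
      using y[of t] t J by (auto intro: has_field_derivative_at_within)
    have "(F has_real_derivative k t) (at t within J)"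
      using F[OF t] by (simp add: has_real_derivative_iff_has_vector_derivative)
    then have "((\<lambda>t. exp (- F t)) has_real_derivative exp (- F t) * - k t) (at t within J)"
      using DERIV_chain2[OF DERIV_exp DERIV_minus] by simp
    from DERIV_mult[OF dy this]
    have "((\<lambda>t. y t * exp (- F t)) has_real_derivative
        k t * y t * exp (- F t) + exp (- F t) * - k t * y t) (at t within J)" .
    then show "((\<lambda>t. y t * exp (- F t)) has_real_derivative 0) (at t within J)"
      by (simp add: algebra_simps)
  qed (simp add: J_def)
  then have "y b * exp (- F b) = y a * exp (- F a)"
    by (auto simp: J_def)
  then show ?thesis using a(2) by (metis exp_not_eq_zero mult_eq_0_iff)
qed

section \<open>Algebraic curvature tensors in dimension three\<close>

lemma card_3_UNIV:
  assumes "CARD('n::finite) = 3" and "a \<noteq> b" "a \<noteq> c" "b \<noteq> (c::'n)"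
  shows "UNIV = {a, b, c}"
proof -
  have "card {a, b, c} = 3" using assms(2-) by simp
  then show ?thesis using assms(1) by (metis card_subset_eq finite subset_UNIV)
qed

lemma card_3_obtain_third:
  assumes "CARD('n::finite) = 3" and "a \<noteq> (b::'n)"
  obtains c where "c \<noteq> a" "c \<noteq> b"
proof -
  have "UNIV \<noteq> {a, b}"
  proof
    assume "UNIV = {a, b}"
    then have "CARD('n) = card {a, b}" by simp
    then show False using assms by simp
  qed
  then show ?thesis using that by blast
qed

context
  fixes V :: "'n::finite \<Rightarrow> 'n \<Rightarrow> 'n \<Rightarrow> 'n \<Rightarrow> real"
  assumes card: "CARD('n) = 3"
    and antisym1: "\<And>r s m n. V r s m n = - V s r m n"
    and antisym2: "\<And>r s m n. V r s m n = - V r s n m"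
    and trace: "\<And>s n. (\<Sum>r\<in>UNIV. V r s r n) = 0"
begin

private lemma curvature_3_diag_sectional: "a \<noteq> b \<Longrightarrow> V a b a b = 0"
proof -
  assume ab: "a \<noteq> b"
  obtain c where c: "c \<noteq> a" "c \<noteq> b" using card_3_obtain_third[OF card ab] by blast
  have U: "UNIV = {a, b, c}" using card_3_UNIV[OF card ab] c by auto
  have z: "V x x y y' = 0" for x y y' using antisym1[of x x y y'] by simp
  have sw: "V x y x y = V y x y x" for x y using antisym1[of x y x y] antisym2[of y x x y] by simp
  have "V a b a b + V c b c b = 0" "V b a b a + V c a c a = 0" "V a c a c + V b c b c = 0"
    using trace[of b b] trace[of a a] trace[of c c] ab c by (simp_all add: U z)
  then show ?thesis using sw[of a b] sw[of c b] sw[of c a] by linarith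
qed

private lemma curvature_3_trace_term: "p \<noteq> a \<Longrightarrow> p \<noteq> b \<Longrightarrow> V p a p b = 0"
proof (cases "a = b")
  case True
  then show "p \<noteq> a \<Longrightarrow> V p a p b = 0" using curvature_3_diag_sectional by simp
next
  case False
  assume "p \<noteq> a" "p \<noteq> b"
  then have U: "UNIV = {p, a, b}" using card_3_UNIV[OF card] False by auto
  have "(\<Sum>r\<in>{p, a, b}. V r a r b) = V p a p b + V a a a b + V b a b b"
    using False \<open>p \<noteq> a\<close> \<open>p \<noteq> b\<close> by simp
  moreover have "V a a a b = 0" "V b a b b = 0"
    using antisym1[of a a a b] antisym2[of b a b b] by simp_all
  ultimately show ?thesis using trace[of a b] by (simp add: U)
qed

lemma traceless_curvature_3_eq_0: "V r s m n = 0"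
proof (cases "r = s \<or> m = n")
  case True
  then show ?thesis using antisym1[of r r m n] antisym2[of r s m m] by auto
next
  case False
  then have rs: "r \<noteq> s" and mn: "m \<noteq> n" by auto
  have "r = m \<or> r = n \<or> s = m \<or> s = n"
  proof (rule ccontr)
    assume disj: "\<not> (r = m \<or> r = n \<or> s = m \<or> s = n)"
    then have "UNIV = {r, s, m}" using card_3_UNIV[OF card rs] by simp
    then have "n \<in> {r, s, m}" by (metis UNIV_I)
    then show False using disj mn by auto
  qed
  then show ?thesis
  proof (elim disjE)
    assume "r = m"
    then show ?thesis using curvature_3_trace_term[of r s n] rs mn by simp
  next
    assume "r = n"
    then show ?thesis using curvature_3_trace_term[of r s m] rs mn antisym2[of r s m n] by simp
  next
    assume "s = m"
    then show ?thesis using curvature_3_trace_term[of s r n] rs mn antisym1[of r s m n] by simp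
  next
    assume "s = n"
    then show ?thesis
      using curvature_3_trace_term[of s r m] rs mn antisym1[of r s m n] antisym2[of s r m n] by simp
  qed
qed

end

lemma riemann_diag_eq_0: "riemann E G p r s m m = 0"
  by (simp add: riemann_def)

lemma riemann_antisym: "riemann E G p r s m n = - riemann E G p r s n m"
  by (simp add: riemann_def algebra_simps sum_subtractf)

locale riemannian_chart =
  fixes E :: "'i::finite \<Rightarrow> 'p::real_normed_vector" and U :: "'p set"
    and \<gamma> :: "'p \<Rightarrow> 'i \<Rightarrow> 'i \<Rightarrow> real"
  assumes U_open: "open U" and riem: "riemannian_metric_on E U \<gamma>"
begin

abbreviation "chr \<equiv> christoffel E \<gamma>"

definition dmetric :: "'i \<Rightarrow> 'i \<Rightarrow> 'i \<Rightarrow> 'p \<Rightarrow> real" where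
  "dmetric k a b y = partial E k (\<lambda>x. \<gamma> x a b) y"

definition ddmetric :: "'i \<Rightarrow> 'i \<Rightarrow> 'i \<Rightarrow> 'i \<Rightarrow> 'p \<Rightarrow> real" where
  "ddmetric m k a b y = partial E m (dmetric k a b) y"

definition christoffel_low :: "'p \<Rightarrow> 'i \<Rightarrow> 'i \<Rightarrow> 'i \<Rightarrow> real" where
  "christoffel_low y a m n = (\<Sum>r\<in>UNIV. \<gamma> y a r * christoffel E \<gamma> y r m n)"

definition christoffel_quad :: "'p \<Rightarrow> 'i \<Rightarrow> 'i \<Rightarrow> 'i \<Rightarrow> 'i \<Rightarrow> real" where
  "christoffel_quad y a s m n = (\<Sum>r\<in>UNIV. christoffel_low y r m a * christoffel E \<gamma> y r n s)"

lemma metric_smooth: "smooth_on E U (\<lambda>x. \<gamma> x a b)"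
  and metric_sym: "y \<in> U \<Longrightarrow> \<gamma> y a b = \<gamma> y b a"
  and metric_posdef: "y \<in> U \<Longrightarrow> positive_definite (\<gamma> y)"
  using riem unfolding riemannian_metric_on_iff by blast+

lemma metric_inv_right: "y \<in> U \<Longrightarrow> (\<Sum>k\<in>UNIV. \<gamma> y i k * matrix_inv_fun (\<gamma> y) k j) = kdelta i j"
  and metric_inv_left: "y \<in> U \<Longrightarrow> (\<Sum>k\<in>UNIV. matrix_inv_fun (\<gamma> y) i k * \<gamma> y k j) = kdelta i j"
  using positive_definite_matrix_inv_fun[OF metric_posdef] by blast+

lemma metric_inv_sym: "y \<in> U \<Longrightarrow> matrix_inv_fun (\<gamma> y) i j = matrix_inv_fun (\<gamma> y) j i"
  using matrix_inv_fun_sym metric_posdef metric_sym by blast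

lemma dmetric_sym: "y \<in> U \<Longrightarrow> dmetric k a b y = dmetric k b a y"
  unfolding dmetric_def by (rule partial_cong_on_open[OF U_open]) (auto intro: metric_sym)

lemma ddmetric_sym: "y \<in> U \<Longrightarrow> ddmetric m k a b y = ddmetric m k b a y"
  unfolding ddmetric_def by (rule partial_cong_on_open[OF U_open]) (auto intro: dmetric_sym)

lemma ddmetric_commute: "y \<in> U \<Longrightarrow> ddmetric m k a b y = ddmetric k m a b y"
  unfolding ddmetric_def dmetric_def[abs_def] by (rule partial_commute[OF U_open _ metric_smooth])

lemma DERIV_metric: "y \<in> U \<Longrightarrow> DERIV (\<lambda>s. \<gamma> (y + s *\<^sub>R E m) a b) 0 :> dmetric m a b y"
  using smooth_on_DERIV_partial[OF metric_smooth] by (simp add: dmetric_def)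

lemma DERIV_dmetric: "y \<in> U \<Longrightarrow> DERIV (\<lambda>s. dmetric k a b (y + s *\<^sub>R E m)) 0 :> ddmetric m k a b y"
  using smooth_on_DERIV_partial2[OF metric_smooth] by (simp add: dmetric_def[abs_def] ddmetric_def)

lemma christoffel_eq:
  "christoffel E \<gamma> y r m n
     = (1/2) * (\<Sum>s\<in>UNIV. matrix_inv_fun (\<gamma> y) r s * (dmetric m s n y + dmetric n s m y - dmetric s m n y))"
  by (simp add: christoffel_def metric_inv_eq_matrix_inv_fun dmetric_def)

lemma christoffel_low_eq:
  assumes y: "y \<in> U"
  shows "christoffel_low y a m n = (1/2) * (dmetric m a n y + dmetric n a m y - dmetric a m n y)"
proof -
  have "christoffel_low y a m n = (1/2) * (\<Sum>s\<in>UNIV. (\<Sum>r\<in>UNIV. \<gamma> y a r * matrix_inv_fun (\<gamma> y) r s)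
      * (dmetric m s n y + dmetric n s m y - dmetric s m n y))"
    unfolding christoffel_low_def christoffel_eq by (simp add: sum_swap_mult sum_distrib_left mult_ac)
  then show ?thesis by (simp add: metric_inv_right[OF y])
qed

lemma christoffel_raise:
  assumes y: "y \<in> U"
  shows "christoffel E \<gamma> y r m n = (\<Sum>b\<in>UNIV. matrix_inv_fun (\<gamma> y) r b * christoffel_low y b m n)"
proof -
  have "(\<Sum>b\<in>UNIV. matrix_inv_fun (\<gamma> y) r b * christoffel_low y b m n)
      = (\<Sum>c\<in>UNIV. (\<Sum>b\<in>UNIV. matrix_inv_fun (\<gamma> y) r b * \<gamma> y b c) * christoffel E \<gamma> y c m n)"
    unfolding christoffel_low_def by (rule sum_swap_mult[symmetric])
  then show ?thesis by (simp add: metric_inv_left[OF y])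
qed

lemma dmetric_eq_christoffel_low:
  "y \<in> U \<Longrightarrow> dmetric m a r y = christoffel_low y a m r + christoffel_low y r m a"
  using christoffel_low_eq[of y a m r] christoffel_low_eq[of y r m a]
    dmetric_sym[of y a r m] dmetric_sym[of y m a r] dmetric_sym[of y r a m]
  by (simp add: algebra_simps)

lemma christoffel_differentiable:
  assumes y: "y \<in> U"
  shows "(\<lambda>s. christoffel E \<gamma> (y + s *\<^sub>R E m) r n k) differentiable (at 0)"
proof -
  have "eventually (\<lambda>s. y + s *\<^sub>R E m \<in> U) (nhds 0)"
    by (rule eventually_line_in_open[OF U_open y])
  then have "eventually (\<lambda>s. det ((\<chi> a b. \<gamma> (y + s *\<^sub>R E m) a b) :: real^'i^'i) \<noteq> 0) (nhds 0)"
    by (rule eventually_mono)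
       (use metric_posdef positive_definite_invertible invertible_det_nz in blast)
  then have "(\<lambda>s. matrix_inv_fun (\<gamma> (y + s *\<^sub>R E m)) r j) differentiable (at 0)" for j
    using DERIV_metric[OF y] by (intro matrix_inv_fun_differentiable) (auto simp: real_differentiable_def)
  moreover have "(\<lambda>s. dmetric i a b (y + s *\<^sub>R E m)) differentiable (at 0)" for i a b
    using DERIV_dmetric[OF y] unfolding real_differentiable_def by blast
  ultimately show ?thesis
    unfolding christoffel_eq
    by (intro differentiable_mult differentiable_const differentiable_sum ballI differentiable_diff
        differentiable_add) auto
qed

lemma DERIV_christoffel:
  "y \<in> U \<Longrightarrow> DERIV (\<lambda>s. christoffel E \<gamma> (y + s *\<^sub>R E m) r n k) 0
     :> partial E m (\<lambda>z. christoffel E \<gamma> z r n k) y"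
  using christoffel_differentiable DERIV_deriv_iff_real_differentiable unfolding partial_def by blast

lemma partial_christoffel_low_product:
  assumes y: "y \<in> U"
  shows "partial E m (\<lambda>z. christoffel_low z a n k) y
     = (\<Sum>r\<in>UNIV. dmetric m a r y * christoffel E \<gamma> y r n k
          + \<gamma> y a r * partial E m (\<lambda>z. christoffel E \<gamma> z r n k) y)"
  unfolding christoffel_low_def
  by (intro partial_eqI DERIV_sum DERIV_mult[OF DERIV_metric[OF y] DERIV_christoffel[OF y], THEN DERIV_cong])
     (simp add: mult.commute)

lemma partial_christoffel_low:
  assumes y: "y \<in> U"
  shows "partial E m (\<lambda>z. christoffel_low z a n k) y
     = (1/2) * (ddmetric m n a k y + ddmetric m k a n y - ddmetric m a n k y)"
proof (rule partial_eqI_on_open[OF U_open y])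
  show "\<And>q. q \<in> U \<Longrightarrow> christoffel_low q a n k = (1/2) * (dmetric n a k q + dmetric k a n q - dmetric a n k q)"
    by (rule christoffel_low_eq)
  show "DERIV (\<lambda>s. (1/2) * (dmetric n a k (y + s *\<^sub>R E m) + dmetric k a n (y + s *\<^sub>R E m)
      - dmetric a n k (y + s *\<^sub>R E m))) 0 :> (1/2) * (ddmetric m n a k y + ddmetric m k a n y - ddmetric m a n k y)"
    by (intro DERIV_cmult DERIV_add DERIV_diff DERIV_dmetric[OF y])
qed

lemma christoffel_quad_swap:
  assumes y: "y \<in> U"
  shows "christoffel_quad y a s m n = christoffel_quad y s a n m"
proof -
  have "(\<Sum>r\<in>UNIV. X r * (\<Sum>b\<in>UNIV. matrix_inv_fun (\<gamma> y) r b * Y b))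
      = (\<Sum>r\<in>UNIV. Y r * (\<Sum>b\<in>UNIV. matrix_inv_fun (\<gamma> y) r b * X b))" for X Y :: "'i \<Rightarrow> real"
  proof -
    have "(\<Sum>r\<in>UNIV. X r * (\<Sum>b\<in>UNIV. matrix_inv_fun (\<gamma> y) r b * Y b))
        = (\<Sum>r\<in>UNIV. \<Sum>b\<in>UNIV. X r * matrix_inv_fun (\<gamma> y) r b * Y b)"
      by (simp add: sum_distrib_left mult.assoc)
    also have "\<dots> = (\<Sum>b\<in>UNIV. \<Sum>r\<in>UNIV. X r * matrix_inv_fun (\<gamma> y) r b * Y b)"
      by (rule sum.swap)
    also have "\<dots> = (\<Sum>b\<in>UNIV. Y b * (\<Sum>r\<in>UNIV. matrix_inv_fun (\<gamma> y) b r * X r))"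
      by (simp add: sum_distrib_left mult_ac metric_inv_sym[OF y])
    finally show ?thesis .
  qed
  then show ?thesis unfolding christoffel_quad_def christoffel_raise[OF y] .
qed

lemma riemann_low_expand:
  assumes y: "y \<in> U"
  shows "riemann_low E \<gamma> y a s m n =
    partial E m (\<lambda>z. christoffel_low z a n s) y - partial E n (\<lambda>z. christoffel_low z a m s) y
    - christoffel_quad y a s m n + christoffel_quad y a s n m"
proof -
  have quad: "(\<Sum>r\<in>UNIV. \<gamma> y a r * (\<Sum>l\<in>UNIV. chr y r m l * chr y l n s - chr y r n l * chr y l m s))
      = (\<Sum>l\<in>UNIV. christoffel_low y a m l * chr y l n s) - (\<Sum>l\<in>UNIV. christoffel_low y a n l * chr y l m s)"
  proof -
    have "(\<Sum>r\<in>UNIV. \<gamma> y a r * (\<Sum>l\<in>UNIV. chr y r m l * chr y l n s - chr y r n l * chr y l m s))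
       = (\<Sum>r\<in>UNIV. \<gamma> y a r * (\<Sum>l\<in>UNIV. chr y r m l * chr y l n s))
         - (\<Sum>r\<in>UNIV. \<gamma> y a r * (\<Sum>l\<in>UNIV. chr y r n l * chr y l m s))"
      by (simp add: sum_subtractf right_diff_distrib)
    then show ?thesis unfolding christoffel_low_def by (simp only: sum_swap_mult)
  qed
  have lin: "(\<Sum>r\<in>UNIV. \<gamma> y a r * partial E m (\<lambda>z. chr z r n s) y)
      = partial E m (\<lambda>z. christoffel_low z a n s) y - (\<Sum>r\<in>UNIV. christoffel_low y a m r * chr y r n s)
        - christoffel_quad y a s m n" for m n
    unfolding partial_christoffel_low_product[OF y] christoffel_quad_def dmetric_eq_christoffel_low[OF y]
    by (simp add: sum.distrib algebra_simps)
  have "riemann_low E \<gamma> y a s m n = (\<Sum>r\<in>UNIV. \<gamma> y a r * partial E m (\<lambda>z. chr z r n s) y)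
     - (\<Sum>r\<in>UNIV. \<gamma> y a r * partial E n (\<lambda>z. chr z r m s) y)
     + (\<Sum>r\<in>UNIV. \<gamma> y a r * (\<Sum>l\<in>UNIV. chr y r m l * chr y l n s - chr y r n l * chr y l m s))"
    unfolding riemann_low_def riemann_def by (simp add: sum.distrib sum_subtractf algebra_simps)
  then show ?thesis unfolding quad lin by simp
qed

lemma riemann_low_antisym:
  assumes y: "y \<in> U"
  shows "riemann_low E \<gamma> y a s m n = - riemann_low E \<gamma> y s a m n"
proof -
  have "riemann_low E \<gamma> y a s m n + riemann_low E \<gamma> y s a m n = 0"
    unfolding riemann_low_expand[OF y] partial_christoffel_low[OF y]
      christoffel_quad_swap[OF y, of s a m n] christoffel_quad_swap[OF y, of s a n m]
    using ddmetric_sym[OF y, of m s a n] ddmetric_sym[OF y, of m a n s]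
      ddmetric_sym[OF y, of n s a m] ddmetric_sym[OF y, of n a m s]
      ddmetric_commute[OF y, of m n a s] ddmetric_commute[OF y, of m n s a]
    by (simp add: algebra_simps)
  then show ?thesis by simp
qed

lemma riemann_raise:
  assumes y: "y \<in> U"
  shows "riemann E \<gamma> y r b m n = (\<Sum>a\<in>UNIV. matrix_inv_fun (\<gamma> y) r a * riemann_low E \<gamma> y a b m n)"
proof -
  have "(\<Sum>a\<in>UNIV. matrix_inv_fun (\<gamma> y) r a * riemann_low E \<gamma> y a b m n)
     = (\<Sum>c\<in>UNIV. (\<Sum>a\<in>UNIV. matrix_inv_fun (\<gamma> y) r a * \<gamma> y a c) * riemann E \<gamma> y c b m n)"
    unfolding riemann_low_def by (rule sum_swap_mult[symmetric])
  then show ?thesis by (simp add: metric_inv_left[OF y])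
qed

definition riemann_mixed :: "'p \<Rightarrow> 'i \<Rightarrow> 'i \<Rightarrow> 'i \<Rightarrow> 'i \<Rightarrow> real" where
  "riemann_mixed y r s m n = (\<Sum>b\<in>UNIV. matrix_inv_fun (\<gamma> y) s b * riemann E \<gamma> y r b m n)"

lemma riemann_mixed_eq:
  assumes y: "y \<in> U"
  shows "riemann_mixed y r s m n = (\<Sum>a\<in>UNIV. \<Sum>b\<in>UNIV.
    matrix_inv_fun (\<gamma> y) r a * matrix_inv_fun (\<gamma> y) s b * riemann_low E \<gamma> y a b m n)"
proof -
  have "riemann_mixed y r s m n = (\<Sum>b\<in>UNIV. \<Sum>a\<in>UNIV.
      matrix_inv_fun (\<gamma> y) s b * (matrix_inv_fun (\<gamma> y) r a * riemann_low E \<gamma> y a b m n))"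
    unfolding riemann_mixed_def riemann_raise[OF y] by (simp add: sum_distrib_left)
  also have "\<dots> = (\<Sum>a\<in>UNIV. \<Sum>b\<in>UNIV.
      matrix_inv_fun (\<gamma> y) s b * (matrix_inv_fun (\<gamma> y) r a * riemann_low E \<gamma> y a b m n))"
    by (rule sum.swap)
  finally show ?thesis by (simp add: mult_ac)
qed

lemma riemann_mixed_antisym:
  assumes y: "y \<in> U"
  shows "riemann_mixed y r s m n = - riemann_mixed y s r m n"
proof -
  have "riemann_mixed y s r m n = (\<Sum>b\<in>UNIV. \<Sum>a\<in>UNIV.
      matrix_inv_fun (\<gamma> y) s a * matrix_inv_fun (\<gamma> y) r b * riemann_low E \<gamma> y a b m n)"
    unfolding riemann_mixed_eq[OF y] by (rule sum.swap)
  also have "\<dots> = - riemann_mixed y r s m n"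
  proof -
    have "matrix_inv_fun (\<gamma> y) s a * matrix_inv_fun (\<gamma> y) r b * riemann_low E \<gamma> y a b m n
        = - (matrix_inv_fun (\<gamma> y) r b * matrix_inv_fun (\<gamma> y) s a * riemann_low E \<gamma> y b a m n)" for a b
      using riemann_low_antisym[OF y, of a b m n] by simp
    then show ?thesis unfolding riemann_mixed_eq[OF y] by (simp add: sum_negf)
  qed
  finally show ?thesis by simp
qed

lemma riemann_mixed_trace:
  assumes y: "y \<in> U"
  shows "(\<Sum>r\<in>UNIV. riemann_mixed y r s r n) = (\<Sum>b\<in>UNIV. matrix_inv_fun (\<gamma> y) s b * ricci E \<gamma> y b n)"
proof -
  have "(\<Sum>r\<in>UNIV. riemann_mixed y r s r n)
      = (\<Sum>b\<in>UNIV. \<Sum>r\<in>UNIV. matrix_inv_fun (\<gamma> y) s b * riemann E \<gamma> y r b r n)"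
    unfolding riemann_mixed_def by (rule sum.swap)
  then show ?thesis unfolding ricci_def by (simp add: sum_distrib_left)
qed


lemma riemann_eq_of_riemann_mixed:
  assumes y: "y \<in> U"
    and mixed: "\<And>r s m n. riemann_mixed y r s m n = K * (kdelta r m * kdelta s n - kdelta r n * kdelta s m)"
  shows "riemann E \<gamma> y r j m n = K * (kdelta r m * \<gamma> y j n - kdelta r n * \<gamma> y j m)"
proof -
  have "riemann E \<gamma> y r j m n = (\<Sum>s\<in>UNIV. \<gamma> y j s * riemann_mixed y r s m n)"
    unfolding riemann_mixed_def by (simp add: sum_swap_mult[symmetric] metric_inv_right[OF y])
  also have "\<dots> = (\<Sum>s\<in>UNIV. (K * kdelta r m) * (\<gamma> y j s * kdelta s n))
      - (\<Sum>s\<in>UNIV. (K * kdelta r n) * (\<gamma> y j s * kdelta s m))"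
    unfolding mixed by (simp add: sum_subtractf[symmetric] algebra_simps)
  also have "\<dots> = K * (kdelta r m * \<gamma> y j n - kdelta r n * \<gamma> y j m)"
    by (simp add: sum_distrib_left[symmetric] algebra_simps)
  finally show ?thesis .
qed

lemma riemann_low_eq_of_riemann:
  assumes "\<And>r j m n. riemann E \<gamma> y r j m n = K * (kdelta r m * \<gamma> y j n - kdelta r n * \<gamma> y j m)"
  shows "riemann_low E \<gamma> y i j k l = K * (\<gamma> y i k * \<gamma> y j l - \<gamma> y i l * \<gamma> y j k)"
proof -
  have "riemann_low E \<gamma> y i j k l
      = (\<Sum>r\<in>UNIV. (K * \<gamma> y j l) * (\<gamma> y i r * kdelta r k)) - (\<Sum>r\<in>UNIV. (K * \<gamma> y j k) * (\<gamma> y i r * kdelta r l))"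
    unfolding riemann_low_def assms by (simp add: sum_subtractf[symmetric] algebra_simps)
  then show ?thesis by (simp add: sum_distrib_left[symmetric] algebra_simps)
qed

lemma einstein_3_riemann:
  assumes card: "CARD('i) = 3"
    and einstein: "\<And>i j. ricci E \<gamma> y i j = c * \<gamma> y i j"
    and y: "y \<in> U"
  shows "riemann E \<gamma> y r j m n = (c / 2) * (kdelta r m * \<gamma> y j n - kdelta r n * \<gamma> y j m)"
proof (rule riemann_eq_of_riemann_mixed[OF y])
  define V where "V r s m n = riemann_mixed y r s m n - c / 2 * (kdelta r m * kdelta s n - kdelta r n * kdelta s m)"
    for r s m n
  have "(\<Sum>r\<in>UNIV. kdelta r r * kdelta s n - kdelta r n * kdelta s r)
      = (\<Sum>r\<in>(UNIV::'i set). kdelta s n) - (\<Sum>r\<in>UNIV. kdelta s r * kdelta r n)" for s n :: 'i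
    by (simp add: sum_subtractf mult.commute kdelta_def)
  then have delta_trace: "(\<Sum>r\<in>UNIV. kdelta r r * kdelta s n - kdelta r n * kdelta s r) = 2 * kdelta s n"
    for s n :: 'i
    using card by simp
  have mixed_trace: "(\<Sum>r\<in>UNIV. riemann_mixed y r s r n) = c * kdelta s n" for s n
    unfolding riemann_mixed_trace[OF y] einstein
    by (simp add: mult.left_commute[of _ c] sum_distrib_left[symmetric] metric_inv_left[OF y])
  have "(\<Sum>r\<in>UNIV. V r s r n) = (\<Sum>r\<in>UNIV. riemann_mixed y r s r n)
      - c / 2 * (\<Sum>r\<in>UNIV. kdelta r r * kdelta s n - kdelta r n * kdelta s r)" for s n
    unfolding V_def by (simp only: sum_subtractf sum_distrib_left[symmetric])
  then have "(\<Sum>r\<in>UNIV. V r s r n) = 0" for s n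
    unfolding delta_trace mixed_trace by simp
  moreover have "V r s m n = - V s r m n" for r s m n
    unfolding V_def using riemann_mixed_antisym[OF y, of r s m n] by (simp add: algebra_simps)
  moreover have "V r s m n = - V r s n m" for r s m n
    unfolding V_def riemann_mixed_def
    by (simp add: riemann_antisym[of E \<gamma> y r _ m n] sum_negf algebra_simps)
  ultimately have "V r s m n = 0" for r s m n
    using traceless_curvature_3_eq_0[OF card] by blast
  then show "riemann_mixed y r s m n = c / 2 * (kdelta r m * kdelta s n - kdelta r n * kdelta s m)" for r s m n
    unfolding V_def by simp
qed

end

section \<open>Geodesic umbilic vacuum space-times\<close>

locale umbilic_geodesic_vacuum =
  fixes I :: "real set" and U :: "(real ^ 'n::finite) set"
    and N :: "real \<times> (real ^ 'n) \<Rightarrow> real"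
    and g :: "real \<times> (real ^ 'n) \<Rightarrow> 'n \<Rightarrow> 'n \<Rightarrow> real"
    and \<tau> :: "real \<times> (real ^ 'n) \<Rightarrow> real"
  assumes dim: "CARD('n) \<ge> 2"
    and I_interval: "is_interval I" and I_open: "open I" and I_ne: "I \<noteq> {}"
    and U_open: "open U" and U_conn: "connected U" and U_ne: "U \<noteq> {}"
    and N_smooth: "smooth_on st_basis (I \<times> U) N"
    and N_pos: "\<forall>p\<in>I \<times> U. N p > 0"
    and g_riem: "riemannian_metric_on st_basis (I \<times> U) g"
    and umbilic: "\<forall>p\<in>I \<times> U. \<forall>i j. second_fund_form N g p i j = \<tau> p * g p i j"
    and not_totally_geodesic: "\<exists>p\<in>I \<times> U. \<tau> p \<noteq> 0"
    and vacuum: "\<forall>p\<in>I \<times> U. \<forall>a b. ricci st_basis (st_metric N g) p a b = 0"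
    and geodesic: "\<forall>p\<in>I \<times> U. \<forall>s. acceleration N g p s = 0"
begin

abbreviation "S \<equiv> I \<times> U"
abbreviation "G \<equiv> st_metric N g"
abbreviation "\<Gamma> \<equiv> christoffel st_basis G"

lemma S_open: "open S"
  using I_open U_open by (simp add: open_Times)

lemma g_smooth: "smooth_on st_basis S (\<lambda>p. g p a b)"
  and g_sym: "p \<in> S \<Longrightarrow> g p a b = g p b a"
  and g_posdef: "p \<in> S \<Longrightarrow> positive_definite (g p)"
  using g_riem unfolding riemannian_metric_on_iff by blast+

lemma g_inv_right: "p \<in> S \<Longrightarrow> (\<Sum>k\<in>UNIV. g p i k * matrix_inv_fun (g p) k j) = kdelta i j"
  and g_inv_left: "p \<in> S \<Longrightarrow> (\<Sum>k\<in>UNIV. matrix_inv_fun (g p) i k * g p k j) = kdelta i j"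
  using positive_definite_matrix_inv_fun[OF g_posdef] by blast+

lemma N_positive: "p \<in> S \<Longrightarrow> N p > 0"
  using N_pos by blast

lemma G_simps [simp]:
  "G p None None = - (N p)\<^sup>2" "G p None (Some j) = 0" "G p (Some j) None = 0"
  "G p (Some i) (Some j) = g p i j"
  by (simp_all add: st_metric_def)

lemma G_sym: "p \<in> S \<Longrightarrow> G p a b = G p b a"
  by (cases a; cases b) (auto simp: g_sym)

definition G_inv :: "real \<times> (real ^ 'n) \<Rightarrow> 'n option \<Rightarrow> 'n option \<Rightarrow> real" where
  "G_inv p a b = (case (a, b) of (None, None) \<Rightarrow> - 1 / (N p)\<^sup>2
      | (Some i, Some j) \<Rightarrow> matrix_inv_fun (g p) i j | _ \<Rightarrow> 0)"

lemma metric_inv_G: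
  assumes p: "p \<in> S"
  shows "metric_inv G p a b = G_inv p a b"
  unfolding metric_inv_eq_matrix_inv_fun
proof (rule matrix_inv_fun_eqI)
  fix a b :: "'n option"
  show "(\<Sum>c\<in>UNIV. G p a c * G_inv p c b) = kdelta a b"
    using N_positive[OF p] g_inv_right[OF p]
    by (cases a; cases b) (auto simp: sum_UNIV_option G_inv_def kdelta_def)
qed

lemma christoffel_time_upper:
  assumes "p \<in> S"
  shows "\<Gamma> p None m n = - (1 / (2 * (N p)\<^sup>2)) *
     (partial st_basis m (\<lambda>q. G q None n) p + partial st_basis n (\<lambda>q. G q None m) p
      - partial st_basis None (\<lambda>q. G q m n) p)"
  using metric_inv_G[OF assms] by (simp add: christoffel_def sum_UNIV_option G_inv_def)

lemma christoffel_space_upper: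
  assumes "p \<in> S"
  shows "\<Gamma> p (Some k) m n = (1/2) * (\<Sum>j\<in>UNIV. matrix_inv_fun (g p) k j *
     (partial st_basis m (\<lambda>q. G q (Some j) n) p + partial st_basis n (\<lambda>q. G q (Some j) m) p
      - partial st_basis (Some j) (\<lambda>q. G q m n) p))"
  using metric_inv_G[OF assms] by (simp add: christoffel_def sum_UNIV_option G_inv_def)

lemma christoffel_sym: "p \<in> S \<Longrightarrow> \<Gamma> p l m n = \<Gamma> p l n m"
proof -
  assume p: "p \<in> S"
  have "partial st_basis s (\<lambda>q. G q m n) p = partial st_basis s (\<lambda>q. G q n m) p" for s
    by (rule partial_cong_on_open[OF S_open p]) (rule G_sym)
  then show ?thesis unfolding christoffel_def by (simp add: algebra_simps)
qed

lemma partial_neg_N_sq: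
  assumes "p \<in> S"
  shows "partial st_basis m (\<lambda>q. - (N q)\<^sup>2) p = - (2 * N p * partial st_basis m N p)"
  using smooth_on_DERIV_partial[OF N_smooth assms, of m]
  by (intro partial_eqI) (auto intro!: derivative_eq_intros)

lemma partial_space_N_eq_0:
  assumes p: "p \<in> S"
  shows "partial st_basis (Some k) N p = 0"
proof -
  have "acceleration N g p (Some i) = \<Gamma> p (Some i) None None / (N p)\<^sup>2" for i
    by (simp add: acceleration_def sum_UNIV_option unit_normal_def cov_deriv_def power2_eq_square)
  then have "\<Gamma> p (Some i) None None = 0" for i
    using geodesic p N_positive[OF p] by simp
  moreover have "\<Gamma> p (Some i) None None
      = N p * (\<Sum>j\<in>UNIV. matrix_inv_fun (g p) i j * partial st_basis (Some j) N p)" for i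
    using p by (simp add: christoffel_space_upper partial_neg_N_sq sum_distrib_left algebra_simps)
  ultimately have grad: "(\<Sum>j\<in>UNIV. matrix_inv_fun (g p) i j * partial st_basis (Some j) N p) = 0" for i
    using N_positive[OF p] by simp
  have "partial st_basis (Some k) N p
      = (\<Sum>j\<in>UNIV. (\<Sum>i\<in>UNIV. g p k i * matrix_inv_fun (g p) i j) * partial st_basis (Some j) N p)"
    by (simp add: g_inv_right[OF p])
  also have "\<dots> = (\<Sum>i\<in>UNIV. g p k i * (\<Sum>j\<in>UNIV. matrix_inv_fun (g p) i j * partial st_basis (Some j) N p))"
    by (rule sum_swap_mult)
  finally show ?thesis by (simp add: grad)
qed

lemma N_space_independent:
  assumes "t \<in> I" "x \<in> U" "y \<in> U"
  shows "N (t, x) = N (t, y)"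
proof (rule axis_derivative_zero_constant[OF U_open U_conn _ assms(2,3), of "\<lambda>x. N (t, x)"])
  fix w i assume "w \<in> U"
  then show "DERIV (\<lambda>s. N (t, w + s *\<^sub>R axis i 1)) 0 :> 0"
    using smooth_on_DERIV_partial[OF N_smooth, of "(t, w)" "Some i"] partial_space_N_eq_0[of "(t, w)" i]
      assms(1) by simp
qed

lemma partial_time_N_space_independent:
  assumes "t \<in> I" "x \<in> U" "y \<in> U"
  shows "partial st_basis None N (t, x) = partial st_basis None N (t, y)"
proof -
  have "eventually (\<lambda>s. t + s *\<^sub>R 1 \<in> I) (nhds 0)"
    by (rule eventually_line_in_open[OF I_open assms(1)])
  then have "eventually (\<lambda>s. N (t + s, x) = N (t + s, y)) (nhds 0)"
    by (rule eventually_mono) (use N_space_independent[of _ x y] assms in simp)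
  then show ?thesis unfolding partial_def by (simp add: deriv_cong_ev)
qed

lemma partial_time_g:
  assumes p: "p \<in> S"
  shows "partial st_basis None (\<lambda>q. g q i j) p = 2 * N p * \<tau> p * g p i j"
proof -
  have chr: "\<Gamma> p (Some k) (Some i) None
      = (1/2) * (\<Sum>l\<in>UNIV. matrix_inv_fun (g p) k l * partial st_basis None (\<lambda>q. g q l i) p)" for k
    using p by (simp add: christoffel_space_upper)
  have "second_fund_form N g p i j = (\<Sum>k\<in>UNIV. g p k j * (\<Gamma> p (Some k) (Some i) None * (1 / N p)))"
    by (simp add: second_fund_form_def sum_UNIV_option unit_normal_def cov_deriv_def)
  also have "\<dots> = (1 / (2 * N p)) * (\<Sum>k\<in>UNIV. g p j k *
      (\<Sum>l\<in>UNIV. matrix_inv_fun (g p) k l * partial st_basis None (\<lambda>q. g q l i) p))"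
    by (simp add: chr sum_distrib_left mult_ac g_sym[OF p, of _ j])
  also have "\<dots> = (1 / (2 * N p)) * (\<Sum>l\<in>UNIV. (\<Sum>k\<in>UNIV. g p j k * matrix_inv_fun (g p) k l)
      * partial st_basis None (\<lambda>q. g q l i) p)"
    by (simp only: sum_swap_mult)
  also have "\<dots> = (1 / (2 * N p)) * partial st_basis None (\<lambda>q. g q j i) p"
    by (simp add: g_inv_right[OF p])
  also have "partial st_basis None (\<lambda>q. g q j i) p = partial st_basis None (\<lambda>q. g q i j) p"
    by (rule partial_cong_on_open[OF S_open p]) (rule g_sym)
  finally show ?thesis
    using umbilic p N_positive[OF p] by (simp add: field_simps)
qed

lemma g_diag_pos: "p \<in> S \<Longrightarrow> g p i i > 0"
  using positive_definite_diag_pos g_posdef by blast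

text \<open>The expansion rate \<open>H = N \<tau>\<close> (that is \<open>a'/a\<close> for \<open>g = a\<^sup>2 \<gamma>\<close>) is read off one diagonal
  component of \<open>\<partial>\<^sub>t g\<close>, so that it is as smooth as \<open>g\<close>; \<open>\<tau>\<close> itself is not assumed
  differentiable, and any index would do.\<close>

definition hubble :: "real \<times> (real ^ 'n) \<Rightarrow> real" where
  "hubble p = partial st_basis None (\<lambda>q. g q undefined undefined) p / (2 * g p undefined undefined)"

lemma hubble_eq:
  assumes "p \<in> S"
  shows "hubble p = N p * \<tau> p"
  using partial_time_g[OF assms, of undefined undefined] g_diag_pos[OF assms, of undefined]
  by (simp add: hubble_def)

lemma partial_time_g_hubble: "p \<in> S \<Longrightarrow> partial st_basis None (\<lambda>q. g q i j) p = 2 * hubble p * g p i j"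
  using partial_time_g hubble_eq by simp

lemma hubble_DERIV:
  assumes p: "p \<in> S"
  shows "DERIV (\<lambda>s. hubble (p + s *\<^sub>R st_basis m)) 0 :> partial st_basis m hubble p"
proof -
  let ?i = "undefined :: 'n"
  have "(\<lambda>s. partial st_basis None (\<lambda>q. g q ?i ?i) (p + s *\<^sub>R st_basis m)) differentiable (at 0)"
    using smooth_on_DERIV_partial2[OF g_smooth p] real_differentiable_def by blast
  moreover have "(\<lambda>s. g (p + s *\<^sub>R st_basis m) ?i ?i) differentiable (at 0)"
    using smooth_on_DERIV_partial[OF g_smooth p] real_differentiable_def by blast
  ultimately have "(\<lambda>s. hubble (p + s *\<^sub>R st_basis m)) differentiable (at 0)"
    unfolding hubble_def using g_diag_pos[OF p, of ?i]
    by (intro differentiable_divide differentiable_mult differentiable_const) auto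
  then show ?thesis
    by (simp add: partial_def DERIV_deriv_iff_real_differentiable)
qed

lemma christoffel_t_tt:
  assumes "p \<in> S"
  shows "\<Gamma> p None None None = partial st_basis None N p / N p"
proof -
  have "\<Gamma> p None None None = (1 / (2 * (N p)\<^sup>2)) * (2 * N p * partial st_basis None N p)"
    using assms by (simp add: christoffel_time_upper partial_neg_N_sq)
  then show ?thesis using N_positive[OF assms] by (simp add: power2_eq_square)
qed

lemma christoffel_t_tx: "p \<in> S \<Longrightarrow> \<Gamma> p None None (Some j) = 0"
  and christoffel_t_xt: "p \<in> S \<Longrightarrow> \<Gamma> p None (Some j) None = 0"
  and christoffel_x_tt: "p \<in> S \<Longrightarrow> \<Gamma> p (Some k) None None = 0"
  by (simp_all add: christoffel_time_upper christoffel_space_upper partial_neg_N_sq partial_space_N_eq_0)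

lemma christoffel_t_xx: "p \<in> S \<Longrightarrow> \<Gamma> p None (Some i) (Some j) = hubble p * g p i j / (N p)\<^sup>2"
  using N_positive[of p] by (simp add: christoffel_time_upper partial_time_g_hubble field_simps)

lemma christoffel_x_tx:
  assumes p: "p \<in> S"
  shows "\<Gamma> p (Some k) None (Some i) = hubble p * kdelta k i"
proof -
  have "\<Gamma> p (Some k) None (Some i) = hubble p * (\<Sum>j\<in>UNIV. matrix_inv_fun (g p) k j * g p j i)"
    using p by (simp add: christoffel_space_upper partial_time_g_hubble sum_distrib_left mult_ac)
  then show ?thesis using g_inv_left[OF p] by simp
qed

lemma christoffel_x_xt: "p \<in> S \<Longrightarrow> \<Gamma> p (Some k) (Some i) None = hubble p * kdelta k i"
  using christoffel_x_tx christoffel_sym by metis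

lemma riemann_st_expand:
  "riemann st_basis G p r s m n =
     partial st_basis m (\<lambda>q. \<Gamma> q r n s) p - partial st_basis n (\<lambda>q. \<Gamma> q r m s) p
     + (\<Gamma> p r m None * \<Gamma> p None n s - \<Gamma> p r n None * \<Gamma> p None m s)
     + (\<Sum>k\<in>UNIV. \<Gamma> p r m (Some k) * \<Gamma> p (Some k) n s - \<Gamma> p r n (Some k) * \<Gamma> p (Some k) m s)"
  by (simp add: riemann_def sum_UNIV_option)

lemma partial_christoffel_x_tt: "p \<in> S \<Longrightarrow> partial st_basis m (\<lambda>q. \<Gamma> q (Some i) None None) p = 0"
  and partial_christoffel_t_xt: "p \<in> S \<Longrightarrow> partial st_basis m (\<lambda>q. \<Gamma> q None (Some i) None) p = 0"
  and partial_christoffel_t_tx: "p \<in> S \<Longrightarrow> partial st_basis m (\<lambda>q. \<Gamma> q None None (Some i)) p = 0"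
  by (auto intro!: partial_eq_0_on_open[OF S_open]
      simp: christoffel_x_tt christoffel_t_xt christoffel_t_tx)

lemma partial_christoffel_x_xt:
  assumes "p \<in> S"
  shows "partial st_basis m (\<lambda>q. \<Gamma> q (Some k) (Some i) None) p = kdelta k i * partial st_basis m hubble p"
  by (rule partial_eqI_on_open[OF S_open assms, where h = "\<lambda>q. kdelta k i * hubble q"])
     (simp_all add: christoffel_x_xt mult.commute DERIV_cmult hubble_DERIV assms)

lemma partial_christoffel_x_tx:
  assumes "p \<in> S"
  shows "partial st_basis m (\<lambda>q. \<Gamma> q (Some k) None (Some i)) p = kdelta k i * partial st_basis m hubble p"
  by (rule partial_eqI_on_open[OF S_open assms, where h = "\<lambda>q. kdelta k i * hubble q"])
     (simp_all add: christoffel_x_tx mult.commute DERIV_cmult hubble_DERIV assms)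

lemma partial_space_christoffel_t_tt:
  assumes p: "p \<in> S"
  shows "partial st_basis (Some i) (\<lambda>q. \<Gamma> q None None None) p = 0"
proof -
  obtain t x where px: "p = (t, x)" "t \<in> I" "x \<in> U" using p by auto
  show ?thesis
  proof (rule partial_eqI_on_open[OF S_open p])
    fix q assume "q \<in> S"
    then obtain t' y where "q = (t', y)" "t' \<in> I" "y \<in> U" by auto
    then show "\<Gamma> q None None None = partial st_basis None N (fst q, x) / N (fst q, x)"
      using px by (simp add: christoffel_t_tt partial_time_N_space_independent[of t' y x]
          N_space_independent[of t' y x])
  qed (simp add: px)
qed

lemma ricci_tt:
  assumes p: "p \<in> S"
  shows "ricci st_basis G p None None = real CARD('n) *
    (- partial st_basis None hubble p + hubble p * partial st_basis None N p / N p - (hubble p)\<^sup>2)"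
proof -
  have "riemann st_basis G p (Some i) None (Some i) None
      = - partial st_basis None hubble p + hubble p * partial st_basis None N p / N p - (hubble p)\<^sup>2" for i
    using p by (simp add: riemann_st_expand partial_christoffel_x_tt partial_christoffel_x_xt christoffel_x_xt
        christoffel_t_tt christoffel_x_tt christoffel_t_xt christoffel_x_tx kdelta_simps power2_eq_square)
  moreover have "riemann st_basis G p None None None None = 0" by (simp add: riemann_st_expand)
  ultimately show ?thesis by (simp add: ricci_def sum_UNIV_option)
qed

lemma ricci_tx:
  assumes p: "p \<in> S"
  shows "ricci st_basis G p None (Some i) = (1 - real CARD('n)) * partial st_basis (Some i) hubble p"
proof -
  have "riemann st_basis G p (Some j) None (Some j) (Some i)
      = kdelta j i * partial st_basis (Some j) hubble p - partial st_basis (Some i) hubble p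
        + hubble p * (\<Gamma> p (Some j) (Some j) (Some i) - \<Gamma> p (Some j) (Some i) (Some j))" for j
    using p by (simp add: riemann_st_expand partial_christoffel_x_xt christoffel_x_xt christoffel_t_xt
        kdelta_simps sum_subtractf algebra_simps)
  then have "riemann st_basis G p (Some j) None (Some j) (Some i)
      = kdelta j i * partial st_basis (Some j) hubble p - partial st_basis (Some i) hubble p" for j
    using christoffel_sym[OF p, of "Some j" "Some j" "Some i"] by simp
  moreover have "riemann st_basis G p None None None (Some i) = 0"
    using p by (simp add: riemann_st_expand partial_christoffel_t_xt partial_space_christoffel_t_tt
        christoffel_t_xt christoffel_t_tx christoffel_x_tt)
  ultimately have "ricci st_basis G p None (Some i)
      = (\<Sum>j\<in>UNIV. kdelta j i * partial st_basis (Some j) hubble p - partial st_basis (Some i) hubble p)"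
    by (simp add: ricci_def sum_UNIV_option)
  then show ?thesis by (simp add: sum_subtractf algebra_simps)
qed

lemma partial_space_hubble_eq_0:
  assumes p: "p \<in> S"
  shows "partial st_basis (Some i) hubble p = 0"
  using ricci_tx[OF p, of i] vacuum p dim by simp

lemma hubble_ode:
  assumes p: "p \<in> S"
  shows "partial st_basis None hubble p = hubble p * partial st_basis None N p / N p - (hubble p)\<^sup>2"
  using ricci_tt[OF p] vacuum p by simp

lemma hubble_space_independent:
  assumes "t \<in> I" "x \<in> U" "y \<in> U"
  shows "hubble (t, x) = hubble (t, y)"
proof (rule axis_derivative_zero_constant[OF U_open U_conn _ assms(2,3), of "\<lambda>x. hubble (t, x)"])
  fix w i assume "w \<in> U"
  then show "DERIV (\<lambda>s. hubble (t, w + s *\<^sub>R axis i 1)) 0 :> 0"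
    using hubble_DERIV[of "(t, w)" "Some i"] partial_space_hubble_eq_0[of "(t, w)" i] assms(1) by simp
qed

section \<open>The cone structure\<close>

definition x0 :: "real ^ 'n" where
  "x0 = (SOME x. x \<in> U)"

definition t0 :: real where
  "t0 = (SOME t. t \<in> I)"

lemma x0_in_U: "x0 \<in> U" and t0_in_I: "t0 \<in> I"
  using U_ne I_ne by (simp_all add: x0_def t0_def some_in_eq)

definition lapse :: "real \<Rightarrow> real" where
  "lapse t = N (t, x0)"

definition dlapse :: "real \<Rightarrow> real" where
  "dlapse t = partial st_basis None N (t, x0)"

definition H :: "real \<Rightarrow> real" where
  "H t = hubble (t, x0)"

lemma N_eq_lapse: "t \<in> I \<Longrightarrow> x \<in> U \<Longrightarrow> N (t, x) = lapse t"
  using N_space_independent[of t x x0] x0_in_U by (simp add: lapse_def)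

lemma partial_time_N_eq_dlapse: "t \<in> I \<Longrightarrow> x \<in> U \<Longrightarrow> partial st_basis None N (t, x) = dlapse t"
  using partial_time_N_space_independent[of t x x0] x0_in_U by (simp add: dlapse_def)

lemma hubble_eq_H: "t \<in> I \<Longrightarrow> x \<in> U \<Longrightarrow> hubble (t, x) = H t"
  using hubble_space_independent[of t x x0] x0_in_U by (simp add: H_def)

lemma lapse_pos: "t \<in> I \<Longrightarrow> lapse t > 0"
  using N_positive x0_in_U by (simp add: lapse_def)

lemma lapse_DERIV: "t \<in> I \<Longrightarrow> DERIV lapse t :> dlapse t"
  unfolding lapse_def[abs_def] dlapse_def by (rule smooth_on_DERIV_time[OF N_smooth _ x0_in_U])

lemma H_ode: "t \<in> I \<Longrightarrow> partial st_basis None hubble (t, x0) = H t * dlapse t / lapse t - (H t)\<^sup>2"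
  using hubble_ode[of "(t, x0)"] x0_in_U by (simp add: H_def lapse_def dlapse_def)

lemma H_DERIV: "t \<in> I \<Longrightarrow> DERIV H t :> H t * dlapse t / lapse t - (H t)\<^sup>2"
  using hubble_DERIV[of "(t, x0)" None] x0_in_U H_ode unfolding H_def[abs_def] by (simp add: DERIV_time_iff)

lemma dlapse_continuous_on: "continuous_on I dlapse"
proof -
  have "continuous_on I (\<lambda>t. iter_partial st_basis [None] N (t, x0))"
    by (rule continuous_on_compose2[OF smooth_on_continuous_on[OF N_smooth]])
       (auto intro!: continuous_intros simp: x0_in_U)
  then show ?thesis by (simp add: dlapse_def[abs_def])
qed

lemma H_nonzero:
  assumes t: "t \<in> I"
  shows "H t \<noteq> 0"
proof -
  obtain t1 x1 where "t1 \<in> I" "x1 \<in> U" "\<tau> (t1, x1) \<noteq> 0"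
    using not_totally_geodesic by auto
  moreover from this have "H t1 = N (t1, x1) * \<tau> (t1, x1)"
    using hubble_eq[of "(t1, x1)"] hubble_eq_H[of t1 x1] by simp
  ultimately have t1: "t1 \<in> I" "H t1 \<noteq> 0"
    using N_positive[of "(t1, x1)"] by auto
  have "continuous_on I lapse" "continuous_on I H"
    using DERIV_isCont[OF lapse_DERIV] DERIV_isCont[OF H_DERIV] by (auto intro: continuous_at_imp_continuous_on)
  then have k: "continuous_on I (\<lambda>t. dlapse t / lapse t - H t)"
    using lapse_pos by (intro continuous_intros dlapse_continuous_on) (auto simp: less_imp_neq[symmetric])
  have "DERIV H t :> (dlapse t / lapse t - H t) * H t" if "t \<in> I" for t
    using H_DERIV[OF that] by (simp add: algebra_simps power2_eq_square)
  from linear_ode_nonzero[OF I_interval k this t1 t] show ?thesis .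
qed

text \<open>The time function of the cone: \<open>d\<phi> = N dt\<close> by the Riccati equation for \<open>H\<close>.\<close>

definition cone_time :: "real \<Rightarrow> real" where
  "cone_time t = lapse t / H t"

lemma cone_time_nonzero: "t \<in> I \<Longrightarrow> cone_time t \<noteq> 0"
  using lapse_pos[of t] H_nonzero[of t] by (simp add: cone_time_def)

lemma H_cone_time: "t \<in> I \<Longrightarrow> H t * cone_time t = lapse t"
  using H_nonzero by (simp add: cone_time_def)

lemma cone_time_DERIV:
  assumes t: "t \<in> I"
  shows "DERIV cone_time t :> lapse t"
proof -
  have "DERIV cone_time t :> (dlapse t * H t - lapse t * (H t * dlapse t / lapse t - (H t)\<^sup>2)) / (H t * H t)"
    unfolding cone_time_def[abs_def] by (rule DERIV_divide[OF lapse_DERIV[OF t] H_DERIV[OF t] H_nonzero[OF t]])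
  then show ?thesis
    using lapse_pos[OF t] H_nonzero[OF t] by (simp add: field_simps power2_eq_square)
qed

definition base_metric :: "real ^ 'n \<Rightarrow> 'n \<Rightarrow> 'n \<Rightarrow> real" where
  "base_metric x i j = g (t0, x) i j / (cone_time t0)\<^sup>2"

lemma g_DERIV_time:
  assumes "t \<in> I" "x \<in> U"
  shows "DERIV (\<lambda>u. g (u, x) i j) t :> 2 * H t * g (t, x) i j"
  using smooth_on_DERIV_time[OF g_smooth assms] assms by (simp add: partial_time_g_hubble hubble_eq_H)

lemma g_cone_form:
  assumes t: "t \<in> I" and x: "x \<in> U"
  shows "g (t, x) i j = (cone_time t)\<^sup>2 * base_metric x i j"
proof -
  define \<psi> where "\<psi> u = g (u, x) i j / (cone_time u)\<^sup>2" for u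
  have "\<exists>C. \<forall>u\<in>I. \<psi> u = C"
  proof (rule has_field_derivative_zero_constant)
    show "convex I" using I_interval by (rule is_interval_convex)
    fix u assume u: "u \<in> I"
    have "DERIV (\<lambda>u. (cone_time u)\<^sup>2) u :> 2 * cone_time u * lapse u"
      using DERIV_mult[OF cone_time_DERIV[OF u] cone_time_DERIV[OF u]] by (simp add: power2_eq_square algebra_simps)
    moreover have "(cone_time u)\<^sup>2 \<noteq> 0" using cone_time_nonzero[OF u] by simp
    ultimately have "DERIV \<psi> u :> (2 * H u * g (u, x) i j * (cone_time u)\<^sup>2 - g (u, x) i j * (2 * cone_time u * lapse u))
        / ((cone_time u)\<^sup>2 * (cone_time u)\<^sup>2)"
      unfolding \<psi>_def[abs_def] by (intro DERIV_divide g_DERIV_time[OF u x])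
    moreover have "2 * H u * g (u, x) i j * (cone_time u)\<^sup>2 - g (u, x) i j * (2 * cone_time u * lapse u) = 0"
      using H_cone_time[OF u] by (simp add: power2_eq_square algebra_simps)
    ultimately show "(\<psi> has_real_derivative 0) (at u within I)"
      by (simp add: has_field_derivative_at_within)
  qed
  then have "\<psi> t = \<psi> t0" using t t0_in_I by auto
  then show ?thesis
    using cone_time_nonzero[OF t] cone_time_nonzero[OF t0_in_I] by (simp add: \<psi>_def base_metric_def field_simps)
qed

lemma base_metric_riemannian: "riemannian_metric_on sp_basis U base_metric"
  unfolding riemannian_metric_on_iff
proof (intro conjI allI ballI)
  fix a b
  show "smooth_on sp_basis U (\<lambda>x. base_metric x a b)"
    using smooth_on_cmult[OF smooth_on_slice[OF g_smooth U_open t0_in_I] U_open, of "1 / (cone_time t0)\<^sup>2"]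
    by (simp add: base_metric_def)
next
  fix x a b assume "x \<in> U"
  then show "base_metric x a b = base_metric x b a"
    using g_sym[of "(t0, x)"] t0_in_I by (simp add: base_metric_def)
next
  fix x assume "x \<in> U"
  then have "positive_definite (g (t0, x))" using g_posdef t0_in_I by simp
  then show "positive_definite (base_metric x)"
    using cone_time_nonzero[OF t0_in_I]
    by (simp add: positive_definite_def base_metric_def sum_divide_distrib[symmetric])
qed

sublocale base: riemannian_chart sp_basis U base_metric
  by unfold_locales (rule U_open, rule base_metric_riemannian)

section \<open>Curvature of the cone\<close>

lemma g_inv_cone:
  assumes t: "t \<in> I" and y: "y \<in> U"
  shows "matrix_inv_fun (g (t, y)) i j = matrix_inv_fun (base_metric y) i j / (cone_time t)\<^sup>2"
proof (rule matrix_inv_fun_eqI)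
  fix i j
  show "(\<Sum>k\<in>UNIV. g (t, y) i k * (matrix_inv_fun (base_metric y) k j / (cone_time t)\<^sup>2)) = kdelta i j"
    using cone_time_nonzero[OF t] base.metric_inv_right[OF y] by (simp add: g_cone_form[OF t y])
qed

lemma partial_space_g_cone:
  assumes t: "t \<in> I" and y: "y \<in> U"
  shows "partial st_basis (Some i) (\<lambda>q. g q l j) (t, y)
    = (cone_time t)\<^sup>2 * partial sp_basis i (\<lambda>x. base_metric x l j) y"
proof (rule partial_eqI_on_open[OF S_open, where h="\<lambda>q. (cone_time (fst q))\<^sup>2 * base_metric (snd q) l j"])
  show "(t, y) \<in> S" using t y by simp
  show "\<And>q. q \<in> S \<Longrightarrow> g q l j = (cone_time (fst q))\<^sup>2 * base_metric (snd q) l j"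
    using g_cone_form by auto
  have "DERIV (\<lambda>s. base_metric (y + s *\<^sub>R sp_basis i) l j) 0 :> partial sp_basis i (\<lambda>x. base_metric x l j) y"
    by (rule smooth_on_DERIV_partial[OF base.metric_smooth y])
  then show "DERIV (\<lambda>s. (cone_time (fst ((t, y) + s *\<^sub>R st_basis (Some i))))\<^sup>2
      * base_metric (snd ((t, y) + s *\<^sub>R st_basis (Some i))) l j) 0
      :> (cone_time t)\<^sup>2 * partial sp_basis i (\<lambda>x. base_metric x l j) y"
    by (simp add: DERIV_cmult)
qed

lemma christoffel_x_xx:
  assumes t: "t \<in> I" and y: "y \<in> U"
  shows "\<Gamma> (t, y) (Some k) (Some i) (Some j) = christoffel sp_basis base_metric y k i j"
proof -
  have "\<Gamma> (t, y) (Some k) (Some i) (Some j) = (1/2) * (\<Sum>l\<in>UNIV. matrix_inv_fun (g (t, y)) k l *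
     (partial st_basis (Some i) (\<lambda>q. G q (Some l) (Some j)) (t, y)
      + partial st_basis (Some j) (\<lambda>q. G q (Some l) (Some i)) (t, y)
      - partial st_basis (Some l) (\<lambda>q. G q (Some i) (Some j)) (t, y)))"
    by (rule christoffel_space_upper) (use t y in simp)
  also have "\<dots> = christoffel sp_basis base_metric y k i j"
    unfolding christoffel_def metric_inv_eq_matrix_inv_fun using t y cone_time_nonzero[OF t]
    by (simp add: g_inv_cone partial_space_g_cone algebra_simps)
  finally show ?thesis .
qed

lemma partial_space_christoffel_x_xx:
  assumes t: "t \<in> I" and y: "y \<in> U"
  shows "partial st_basis (Some m) (\<lambda>q. \<Gamma> q (Some k) (Some i) (Some j)) (t, y)
       = partial sp_basis m (\<lambda>y. christoffel sp_basis base_metric y k i j) y"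
proof -
  have "partial st_basis (Some m) (\<lambda>q. \<Gamma> q (Some k) (Some i) (Some j)) (t, y)
      = partial st_basis (Some m) (\<lambda>q. christoffel sp_basis base_metric (snd q) k i j) (t, y)"
    by (rule partial_cong_on_open[OF S_open]) (use t y christoffel_x_xx in auto)
  then show ?thesis by (simp add: partial_def)
qed

lemma partial_time_christoffel_x_xx:
  assumes t: "t \<in> I" and y: "y \<in> U"
  shows "partial st_basis None (\<lambda>q. \<Gamma> q (Some k) (Some i) (Some j)) (t, y) = 0"
proof -
  have "partial st_basis None (\<lambda>q. \<Gamma> q (Some k) (Some i) (Some j)) (t, y)
      = partial st_basis None (\<lambda>q. christoffel sp_basis base_metric (snd q) k i j) (t, y)"
    by (rule partial_cong_on_open[OF S_open]) (use t y christoffel_x_xx in auto)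
  then show ?thesis by (simp add: partial_def)
qed

lemma H_eq_lapse_cone_time: "t \<in> I \<Longrightarrow> H t = lapse t / cone_time t"
  using cone_time_nonzero H_cone_time by (simp add: field_simps)

lemma christoffel_t_xx_cone:
  assumes t: "t \<in> I" and y: "y \<in> U"
  shows "\<Gamma> (t, y) None (Some i) (Some j) = cone_time t / lapse t * base_metric y i j"
  using t y cone_time_nonzero[OF t] lapse_pos[OF t]
  by (simp add: christoffel_t_xx g_cone_form hubble_eq_H N_eq_lapse H_eq_lapse_cone_time
      power2_eq_square field_simps)

lemma christoffel_t_tt_cone:
  assumes t: "t \<in> I" and y: "y \<in> U"
  shows "\<Gamma> (t, y) None None None = dlapse t / lapse t"
  using t y by (simp add: christoffel_t_tt N_eq_lapse partial_time_N_eq_dlapse)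

lemma christoffel_x_tx_cone: "t \<in> I \<Longrightarrow> y \<in> U \<Longrightarrow> \<Gamma> (t, y) (Some k) None (Some i) = H t * kdelta k i"
  and christoffel_x_xt_cone: "t \<in> I \<Longrightarrow> y \<in> U \<Longrightarrow> \<Gamma> (t, y) (Some k) (Some i) None = H t * kdelta k i"
  by (simp_all add: christoffel_x_tx christoffel_x_xt hubble_eq_H)

lemma partial_time_christoffel_t_xx:
  assumes t: "t \<in> I" and y: "y \<in> U"
  shows "partial st_basis None (\<lambda>q. \<Gamma> q None (Some i) (Some j)) (t, y)
     = base_metric y i j * ((lapse t)\<^sup>2 - cone_time t * dlapse t) / (lapse t)\<^sup>2"
proof (rule partial_eqI_on_open[OF S_open, where h="\<lambda>q. cone_time (fst q) / lapse (fst q) * base_metric (snd q) i j"])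
  show "(t, y) \<in> S" using t y by simp
  show "\<And>q. q \<in> S \<Longrightarrow> \<Gamma> q None (Some i) (Some j) = cone_time (fst q) / lapse (fst q) * base_metric (snd q) i j"
    using christoffel_t_xx_cone by auto
  have "DERIV (\<lambda>u. cone_time u / lapse u) t :> (lapse t * lapse t - cone_time t * dlapse t) / (lapse t * lapse t)"
    using DERIV_divide[OF cone_time_DERIV[OF t] lapse_DERIV[OF t]] lapse_pos[OF t] by simp
  then have "DERIV (\<lambda>u. cone_time u / lapse u * base_metric y i j) t :> (lapse t * lapse t - cone_time t * dlapse t) / (lapse t * lapse t) * base_metric y i j"
    by (rule DERIV_cmult_right)
  then show "DERIV (\<lambda>s. cone_time (fst ((t, y) + s *\<^sub>R st_basis None)) / lapse (fst ((t, y) + s *\<^sub>R st_basis None)) * base_metric (snd ((t, y) + s *\<^sub>R st_basis None)) i j) 0 :>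
     base_metric y i j * ((lapse t)\<^sup>2 - cone_time t * dlapse t) / (lapse t)\<^sup>2"
    using DERIV_time_iff[of "\<lambda>q. cone_time (fst q) / lapse (fst q) * base_metric (snd q) i j" t y]
    by (simp add: power2_eq_square mult_ac)
qed


lemma H_cone_time_lapse: "t \<in> I \<Longrightarrow> H t * (cone_time t / lapse t) = 1"
  using H_cone_time lapse_pos by (metis less_irrefl times_divide_eq_right divide_self)

lemma partial_space_christoffel_t_xx:
  assumes t: "t \<in> I" and y: "y \<in> U"
  shows "partial st_basis (Some k) (\<lambda>q. \<Gamma> q None (Some i) (Some j)) (t, y) = cone_time t / lapse t * base.dmetric k i j y"
proof (rule partial_eqI_on_open[OF S_open, where h="\<lambda>q. cone_time (fst q) / lapse (fst q) * base_metric (snd q) i j"])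
  show "(t, y) \<in> S" using t y by simp
  show "\<And>q. q \<in> S \<Longrightarrow> \<Gamma> q None (Some i) (Some j) = cone_time (fst q) / lapse (fst q) * base_metric (snd q) i j"
    using christoffel_t_xx_cone by auto
  show "DERIV (\<lambda>s. cone_time (fst ((t, y) + s *\<^sub>R st_basis (Some k))) / lapse (fst ((t, y) + s *\<^sub>R st_basis (Some k))) *
      base_metric (snd ((t, y) + s *\<^sub>R st_basis (Some k))) i j) 0 :> cone_time t / lapse t * base.dmetric k i j y"
    using DERIV_cmult[OF base.DERIV_metric[OF y, where m=k and a=i and b=j], of "cone_time t / lapse t"] by simp
qed

lemma partial_time_hubble_cone:
  assumes t: "t \<in> I" and y: "y \<in> U"
  shows "partial st_basis None hubble (t, y) = H t * dlapse t / lapse t - (H t)\<^sup>2"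
  using hubble_ode[of "(t, y)"] t y by (simp add: hubble_eq_H N_eq_lapse partial_time_N_eq_dlapse)

lemma riemann_cone_time_upper:
  assumes t: "t \<in> I" and y: "y \<in> U"
  shows "riemann st_basis G (t, y) None None None (Some l) = 0"
    and "riemann st_basis G (t, y) None None (Some m) (Some l) = 0"
    and "riemann st_basis G (t, y) None (Some i) None (Some l) = 0"
    and "riemann st_basis G (t, y) None (Some i) (Some m) (Some l) = 0"
proof -
  have ty: "(t, y) \<in> S" using t y by simp
  show "riemann st_basis G (t, y) None None None (Some l) = 0"
    using ty by (simp add: riemann_st_expand partial_christoffel_t_xt partial_space_christoffel_t_tt
        christoffel_t_xt christoffel_t_tx christoffel_x_tt)
  show "riemann st_basis G (t, y) None None (Some m) (Some l) = 0"
    using t y ty base.metric_sym[OF y, of m l]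
    by (simp add: riemann_st_expand partial_christoffel_t_xt christoffel_t_xt christoffel_t_xx_cone
        christoffel_x_xt_cone kdelta_simps sum_subtractf)
  have "riemann st_basis G (t, y) None (Some i) None (Some l)
      = base_metric y l i * ((lapse t)\<^sup>2 - cone_time t * dlapse t) / (lapse t)\<^sup>2
        + dlapse t / lapse t * (cone_time t / lapse t * base_metric y l i)
        - cone_time t / lapse t * base_metric y l i * H t"
    using t y ty by (simp add: riemann_st_expand partial_time_christoffel_t_xx partial_christoffel_t_tx
        christoffel_t_tt_cone christoffel_t_xx_cone christoffel_t_xt christoffel_t_tx christoffel_x_tx_cone
        kdelta_simps)
  also have "\<dots> = 0"
    using lapse_pos[OF t] cone_time_nonzero[OF t]
    by (simp add: H_eq_lapse_cone_time[OF t] field_simps power2_eq_square)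
  finally show "riemann st_basis G (t, y) None (Some i) None (Some l) = 0" .
  have "riemann st_basis G (t, y) None (Some i) (Some m) (Some l) = cone_time t / lapse t *
      (base.dmetric m l i y - base.dmetric l m i y + base.christoffel_low y m l i - base.christoffel_low y l m i)"
    using t y ty by (simp add: riemann_st_expand partial_space_christoffel_t_xx christoffel_t_xt
        christoffel_t_xx_cone christoffel_x_xx base.christoffel_low_def sum_subtractf sum_distrib_left algebra_simps)
  also have "\<dots> = 0"
    using base.christoffel_low_eq[OF y, of m l i] base.christoffel_low_eq[OF y, of l m i]
      base.dmetric_sym[OF y, of i m l]
    by simp
  finally show "riemann st_basis G (t, y) None (Some i) (Some m) (Some l) = 0" .
qed

lemma riemann_cone_space_upper:
  assumes t: "t \<in> I" and y: "y \<in> U"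
  shows "riemann st_basis G (t, y) (Some k) None None (Some l) = 0"
    and "riemann st_basis G (t, y) (Some k) None (Some m) (Some l) = 0"
    and "riemann st_basis G (t, y) (Some k) (Some i) None (Some l) = 0"
proof -
  have ty: "(t, y) \<in> S" using t y by simp
  have "riemann st_basis G (t, y) (Some k) None None (Some l) =
      kdelta k l * (partial st_basis None hubble (t, y) - H t * (dlapse t / lapse t) + H t * H t)"
    using t y ty by (simp add: riemann_st_expand partial_christoffel_x_xt partial_christoffel_x_tt
        christoffel_x_tt christoffel_t_xt christoffel_x_xt_cone christoffel_x_tx_cone christoffel_t_tt_cone
        kdelta_simps algebra_simps)
  then show "riemann st_basis G (t, y) (Some k) None None (Some l) = 0"
    using lapse_pos[OF t] by (simp add: partial_time_hubble_cone[OF t y] power2_eq_square)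
  have "riemann st_basis G (t, y) (Some k) None (Some m) (Some l) =
      H t * (\<Gamma> (t, y) (Some k) (Some m) (Some l) - \<Gamma> (t, y) (Some k) (Some l) (Some m))"
    using t y ty by (simp add: riemann_st_expand partial_christoffel_x_xt partial_space_hubble_eq_0
        christoffel_t_xt christoffel_x_xt_cone kdelta_simps sum_subtractf algebra_simps)
  then show "riemann st_basis G (t, y) (Some k) None (Some m) (Some l) = 0"
    using christoffel_sym[OF ty, of "Some k" "Some m" "Some l"] by simp
  show "riemann st_basis G (t, y) (Some k) (Some i) None (Some l) = 0"
    using t y ty by (simp add: riemann_st_expand partial_time_christoffel_x_xx partial_christoffel_x_tx
        partial_space_hubble_eq_0 christoffel_x_tt christoffel_t_tx christoffel_x_xt_cone christoffel_x_tx_cone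
        kdelta_simps sum_subtractf algebra_simps)
qed

lemma riemann_cone_gauss:
  assumes t: "t \<in> I" and y: "y \<in> U"
  shows "riemann st_basis G (t, y) (Some k) (Some i) (Some m) (Some l) =
    riemann sp_basis base_metric y k i m l + kdelta k m * base_metric y l i - kdelta k l * base_metric y m i"
proof -
  have "riemann st_basis G (t, y) (Some k) (Some i) (Some m) (Some l) =
      riemann sp_basis base_metric y k i m l + kdelta k m * (H t * (cone_time t / lapse t)) * base_metric y l i
      - kdelta k l * (H t * (cone_time t / lapse t)) * base_metric y m i"
    using t y by (simp add: riemann_st_expand riemann_def[of sp_basis] sum_UNIV_option
        partial_space_christoffel_x_xx christoffel_x_xx christoffel_x_xt_cone christoffel_t_xx_cone
        kdelta_simps algebra_simps)
  then show ?thesis by (simp only: H_cone_time_lapse[OF t] mult_1_left mult_1_right)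
qed

lemma ricci_xx_cone:
  assumes t: "t \<in> I" and y: "y \<in> U"
  shows "ricci st_basis G (t, y) (Some i) (Some j)
    = ricci sp_basis base_metric y i j + (real CARD('n) - 1) * base_metric y i j"
proof -
  have "ricci st_basis G (t, y) (Some i) (Some j) = (\<Sum>k\<in>UNIV. riemann sp_basis base_metric y k i k j
      + base_metric y j i - kdelta k j * base_metric y k i)"
    by (simp add: ricci_def sum_UNIV_option riemann_cone_time_upper(3)[OF t y] riemann_cone_gauss[OF t y])
  also have "\<dots> = ricci sp_basis base_metric y i j + real CARD('n) * base_metric y j i - base_metric y j i"
    by (simp add: ricci_def sum.distrib sum_subtractf)
  finally show ?thesis using base.metric_sym[OF y, of i j] by (simp add: algebra_simps)
qed

lemma base_metric_einstein:
  assumes y: "y \<in> U"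
  shows "ricci sp_basis base_metric y i j = - (real CARD('n) - 1) * base_metric y i j"
proof -
  have "ricci sp_basis base_metric y i j + (real CARD('n) - 1) * base_metric y i j = 0"
    using ricci_xx_cone[OF t0_in_I y, of i j] vacuum t0_in_I y by simp
  then have "ricci sp_basis base_metric y i j = - ((real CARD('n) - 1) * base_metric y i j)"
    by (simp add: eq_neg_iff_add_eq_0)
  then show ?thesis by (simp add: algebra_simps)
qed


lemma base_riemann_3:
  assumes card: "CARD('n) = 3" and y: "y \<in> U"
  shows "riemann sp_basis base_metric y r j m n = - 1 * (kdelta r m * base_metric y j n - kdelta r n * base_metric y j m)"
  using base.einstein_3_riemann[OF card base_metric_einstein[OF y] y] card by simp

lemma base_metric_constant_curvature_3:
  assumes card: "CARD('n) = 3" and y: "y \<in> U"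
  shows "riemann_low sp_basis base_metric y i j k l
    = - 1 * (base_metric y i k * base_metric y j l - base_metric y i l * base_metric y j k)"
  by (rule base.riemann_low_eq_of_riemann) (rule base_riemann_3[OF assms])

lemma riemann_cone_eq_0_3:
  assumes card: "CARD('n) = 3" and p: "p \<in> S"
  shows "riemann st_basis G p a b c d = 0"
proof -
  obtain t y where ty: "p = (t, y)" "t \<in> I" "y \<in> U" using p by auto
  have "riemann st_basis G (t, y) (Some k) (Some i) (Some m) (Some l) = 0" for k i m l
    using base.metric_sym[OF ty(3), of l i] base.metric_sym[OF ty(3), of m i]
    by (simp add: riemann_cone_gauss[OF ty(2,3)] base_riemann_3[OF card ty(3)])
  then have main: "riemann st_basis G p a b c (Some l) = 0" for a b c l
    using riemann_cone_time_upper[OF ty(2,3)] riemann_cone_space_upper[OF ty(2,3)] ty(1)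
    by (cases a; cases b; cases c) auto
  show ?thesis
  proof (cases d)
    case None
    then show ?thesis
      using main[of a b None] riemann_antisym[of st_basis G p a b c d] riemann_diag_eq_0
      by (cases c) auto
  qed (simp add: main)
qed

end

theorem theorem2:
  fixes I :: "real set" and U :: "(real ^ 'n) set"
    and N :: "real \<times> (real ^ 'n) \<Rightarrow> real"
    and g :: "real \<times> (real ^ 'n) \<Rightarrow> 'n \<Rightarrow> 'n \<Rightarrow> real"
    and \<tau> :: "real \<times> (real ^ 'n) \<Rightarrow> real"
  assumes dim: "CARD('n) \<ge> 2"
    and I_interval: "is_interval I" and I_open: "open I" and I_ne: "I \<noteq> {}"
    and U_open: "open U" and U_conn: "connected U" and U_ne: "U \<noteq> {}"
    and N_smooth: "smooth_on st_basis (I \<times> U) N"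
    and N_pos: "\<forall>p\<in>I \<times> U. N p > 0"
    and g_riem: "riemannian_metric_on st_basis (I \<times> U) g"
    and umbilic: "\<forall>p\<in>I \<times> U. \<forall>i j. second_fund_form N g p i j = \<tau> p * g p i j"
    and not_totally_geodesic: "\<exists>p\<in>I \<times> U. \<tau> p \<noteq> 0"
    and vacuum: "\<forall>p\<in>I \<times> U. \<forall>a b. ricci st_basis (st_metric N g) p a b = 0"
    and geodesic: "\<forall>p\<in>I \<times> U. \<forall>s. acceleration N g p s = 0"
  shows "\<exists>\<phi> :: real \<Rightarrow> real. \<exists>\<gamma> :: real ^ 'n \<Rightarrow> 'n \<Rightarrow> 'n \<Rightarrow> real. \<exists>c :: real.
           (\<forall>t\<in>I. \<forall>x\<in>U. (\<phi> has_real_derivative N (t, x)) (at t)) \<and>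
           riemannian_metric_on sp_basis U \<gamma> \<and>
           (\<forall>t\<in>I. \<forall>x\<in>U. \<forall>i j. g (t, x) i j = (\<phi> t)\<^sup>2 * \<gamma> x i j) \<and>
           c < 0 \<and>
           (\<forall>x\<in>U. \<forall>i j. ricci sp_basis \<gamma> x i j = c * \<gamma> x i j) \<and>
           (CARD('n) = 3 \<longrightarrow>
              (\<exists>K::real. K < 0 \<and>
                 (\<forall>x\<in>U. \<forall>i j k l. riemann_low sp_basis \<gamma> x i j k l
                     = K * (\<gamma> x i k * \<gamma> x j l - \<gamma> x i l * \<gamma> x j k))) \<and>
              (\<forall>p\<in>I \<times> U. \<forall>a b c d. riemann st_basis (st_metric N g) p a b c d = 0))"
proof -
  interpret cone: umbilic_geodesic_vacuum I U N g \<tau>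
    using assms by (rule umbilic_geodesic_vacuum.intro)
  show ?thesis
    using cone.cone_time_DERIV cone.N_eq_lapse cone.base_metric_riemannian cone.g_cone_form dim
      cone.base_metric_einstein cone.base_metric_constant_curvature_3 cone.riemann_cone_eq_0_3
    by (intro exI[of _ cone.cone_time] exI[of _ cone.base_metric] exI[of _ "- (real CARD('n) - 1)"]
        conjI impI exI[of _ "- 1"]) auto
qed

end
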